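(* Let $\mathcal C$ be a covariantly finite subcategory of the category of all finitely presented right $R$-modules, and let $T$ be a module in $\varinjlim\mathcal C$. Assume that for every direct system $(C_n,c_{mn}\mid n\le m<\omega)$ of modules from $\mathcal C$ indexed by $\omega$, the inverse system $(\mathrm{Hom}_R(C_n,T),\mathrm{Hom}_R(c_{mn},T))_{n<\omega}$ is Mittag-Leffler. Then $T$ is $\Sigma$-pure-injective.
   Context: $\mathcal C$ covariantly finite in the category of finitely presented modules means every finitely presented module $F$ admits a map $p:F\to C$ with $C\in\mathcal C$ through which every map from $F$ to a module of $\mathcal C$ factors. $\varinjlim\mathcal C$ is the class of all direct limits of direct systems of modules from $\mathcal C$. An inverse system $(H_n,h_{nm})$ is Mittag-Leffler if for each $n$ there is $m\ge n$ with $\mathrm{Im}(h_{nk})=\mathrm{Im}(h_{nm})$ for all $k\ge m$. $T$ is $\Sigma$-pure-injective if every direct sum of copies of $T$ is pure-injective. *)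

theory Defs
  imports Main "HOL-Library.FuncSet"
begin

record ('r, 'm) rmod =
  mcarrier :: "'m set"
  madd :: "'m \<Rightarrow> 'm \<Rightarrow> 'm"
  mzero :: 'm
  mact :: "'m \<Rightarrow> 'r \<Rightarrow> 'm"

definition right_module :: "('r::ring_1, 'm) rmod \<Rightarrow> bool" where
  "right_module M \<longleftrightarrow>
     mzero M \<in> mcarrier M \<and>
     (\<forall>x\<in>mcarrier M. \<forall>y\<in>mcarrier M. madd M x y \<in> mcarrier M) \<and>
     (\<forall>x\<in>mcarrier M. \<forall>r. mact M x r \<in> mcarrier M) \<and>
     (\<forall>x\<in>mcarrier M. \<forall>y\<in>mcarrier M. \<forall>z\<in>mcarrier M.
        madd M (madd M x y) z = madd M x (madd M y z)) \<and>
     (\<forall>x\<in>mcarrier M. \<forall>y\<in>mcarrier M. madd M x y = madd M y x) \<and>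
     (\<forall>x\<in>mcarrier M. madd M (mzero M) x = x) \<and>
     (\<forall>x\<in>mcarrier M. \<exists>y\<in>mcarrier M. madd M x y = mzero M) \<and>
     (\<forall>x\<in>mcarrier M. \<forall>y\<in>mcarrier M. \<forall>r.
        mact M (madd M x y) r = madd M (mact M x r) (mact M y r)) \<and>
     (\<forall>x\<in>mcarrier M. \<forall>r s. mact M x (r + s) = madd M (mact M x r) (mact M x s)) \<and>
     (\<forall>x\<in>mcarrier M. \<forall>r s. mact M x (r * s) = mact M (mact M x r) s) \<and>
     (\<forall>x\<in>mcarrier M. mact M x 1 = x)"

primrec msum :: "('r, 'm) rmod \<Rightarrow> (nat \<Rightarrow> 'm) \<Rightarrow> nat \<Rightarrow> 'm" where
  "msum M f 0 = mzero M"
| "msum M f (Suc n) = madd M (msum M f n) (f n)"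

definition rhom :: "('r::ring_1, 'm) rmod \<Rightarrow> ('r, 'n) rmod \<Rightarrow> ('m \<Rightarrow> 'n) set" where
  "rhom M N = {f. f \<in> mcarrier M \<rightarrow>\<^sub>E mcarrier N \<and>
      (\<forall>x\<in>mcarrier M. \<forall>y\<in>mcarrier M. f (madd M x y) = madd N (f x) (f y)) \<and>
      (\<forall>x\<in>mcarrier M. \<forall>r. f (mact M x r) = mact N (f x) r)}"

definition fin_pres :: "('r::ring_1, 'm) rmod \<Rightarrow> bool" where
  "fin_pres M \<longleftrightarrow> right_module M \<and>
     (\<exists>n (x :: nat \<Rightarrow> 'm). (\<forall>i<n. x i \<in> mcarrier M) \<and>
        (\<forall>y\<in>mcarrier M. \<exists>a::nat \<Rightarrow> 'r. y = msum M (\<lambda>i. mact M (x i) (a i)) n) \<and>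
        (\<exists>k (rel :: nat \<Rightarrow> nat \<Rightarrow> 'r).
           (\<forall>j<k. msum M (\<lambda>i. mact M (x i) (rel j i)) n = mzero M) \<and>
           (\<forall>a::nat \<Rightarrow> 'r. msum M (\<lambda>i. mact M (x i) (a i)) n = mzero M \<longrightarrow>
              (\<exists>s::nat \<Rightarrow> 'r. \<forall>i<n. a i = (\<Sum>j<k. rel j i * s j)))))"

text \<open>C is given by a set of (representatives of) finitely presented modules;
  every finitely presented module is isomorphic to one whose elements are subsets of
  nat => 'r (cosets of R^n), so it suffices to quantify F over that type.\<close>
definition cov_finite :: "('r::ring_1, 'c) rmod set \<Rightarrow> bool" where
  "cov_finite \<C> \<longleftrightarrow> (\<forall>C\<in>\<C>. fin_pres C) \<and>
     (\<forall>F :: ('r, (nat \<Rightarrow> 'r) set) rmod. fin_pres F \<longrightarrow>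
        (\<exists>Cp\<in>\<C>. \<exists>p\<in>rhom F Cp. \<forall>C'\<in>\<C>. \<forall>g\<in>rhom F C'.
            \<exists>h\<in>rhom Cp C'. \<forall>x\<in>mcarrier F. g x = h (p x)))"

text \<open>T is a direct limit of a direct system of modules from C indexed by a directed
  poset (I, le) with index type 'i (concrete description of the direct limit:
  compatible maps g_i : D_i -> T, jointly surjective, with g_i x = 0 iff x dies in
  some D_j).\<close>
definition in_dirlim :: "'i itself \<Rightarrow> ('r::ring_1, 'c) rmod set \<Rightarrow> ('r, 'm) rmod \<Rightarrow> bool" where
  "in_dirlim _ \<C> T \<longleftrightarrow> right_module T \<and>
     (\<exists>(I :: 'i set) (le :: 'i \<Rightarrow> 'i \<Rightarrow> bool) (D :: 'i \<Rightarrow> ('r, 'c) rmod)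
        (f :: 'i \<Rightarrow> 'i \<Rightarrow> 'c \<Rightarrow> 'c) (g :: 'i \<Rightarrow> 'c \<Rightarrow> 'm).
        I \<noteq> {} \<and>
        (\<forall>i\<in>I. le i i) \<and>
        (\<forall>i\<in>I. \<forall>j\<in>I. \<forall>k\<in>I. le i j \<and> le j k \<longrightarrow> le i k) \<and>
        (\<forall>i\<in>I. \<forall>j\<in>I. le i j \<and> le j i \<longrightarrow> i = j) \<and>
        (\<forall>i\<in>I. \<forall>j\<in>I. \<exists>k\<in>I. le i k \<and> le j k) \<and>
        (\<forall>i\<in>I. D i \<in> \<C>) \<and>
        (\<forall>i\<in>I. \<forall>j\<in>I. le i j \<longrightarrow> f i j \<in> rhom (D i) (D j)) \<and>
        (\<forall>i\<in>I. \<forall>x\<in>mcarrier (D i). f i i x = x) \<and>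
        (\<forall>i\<in>I. \<forall>j\<in>I. \<forall>k\<in>I. le i j \<and> le j k \<longrightarrow>
            (\<forall>x\<in>mcarrier (D i). f j k (f i j x) = f i k x)) \<and>
        (\<forall>i\<in>I. g i \<in> rhom (D i) T) \<and>
        (\<forall>i\<in>I. \<forall>j\<in>I. le i j \<longrightarrow> (\<forall>x\<in>mcarrier (D i). g j (f i j x) = g i x)) \<and>
        mcarrier T = (\<Union>i\<in>I. g i ` mcarrier (D i)) \<and>
        (\<forall>i\<in>I. \<forall>x\<in>mcarrier (D i). g i x = mzero T \<longrightarrow>
            (\<exists>j\<in>I. le i j \<and> f i j x = mzero (D j))))"

definition omega_dirsys :: "(nat \<Rightarrow> ('r::ring_1, 'c) rmod) \<Rightarrow> (nat \<Rightarrow> nat \<Rightarrow> 'c \<Rightarrow> 'c) \<Rightarrow> bool" where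
  "omega_dirsys D c \<longleftrightarrow>
     (\<forall>n m. n \<le> m \<longrightarrow> c m n \<in> rhom (D n) (D m)) \<and>
     (\<forall>n. \<forall>x\<in>mcarrier (D n). c n n x = x) \<and>
     (\<forall>n m k. n \<le> m \<and> m \<le> k \<longrightarrow> (\<forall>x\<in>mcarrier (D n). c k m (c m n x) = c k n x))"

definition mittag_leffler :: "(nat \<Rightarrow> 'h set) \<Rightarrow> (nat \<Rightarrow> nat \<Rightarrow> 'h \<Rightarrow> 'h) \<Rightarrow> bool" where
  "mittag_leffler H h \<longleftrightarrow>
     (\<forall>n. \<exists>m\<ge>n. \<forall>k\<ge>m. h n k ` H k = h n m ` H m)"

definition hom_invsys_ML :: "(nat \<Rightarrow> ('r::ring_1, 'c) rmod) \<Rightarrow> (nat \<Rightarrow> nat \<Rightarrow> 'c \<Rightarrow> 'c) \<Rightarrow> ('r, 'm) rmod \<Rightarrow> bool" where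
  "hom_invsys_ML D c T \<longleftrightarrow>
     mittag_leffler (\<lambda>n. rhom (D n) T) (\<lambda>n m u. restrict (u \<circ> c m n) (mcarrier (D n)))"

definition pure_mono :: "('r::ring_1, 'a) rmod \<Rightarrow> ('r, 'b) rmod \<Rightarrow> ('a \<Rightarrow> 'b) \<Rightarrow> bool" where
  "pure_mono A B f \<longleftrightarrow> f \<in> rhom A B \<and> inj_on f (mcarrier A) \<and>
     (\<forall>(m::nat) (n::nat) (r :: nat \<Rightarrow> nat \<Rightarrow> 'r) (a :: nat \<Rightarrow> 'a).
        (\<forall>i<m. a i \<in> mcarrier A) \<longrightarrow>
        (\<exists>y. (\<forall>j<n. y j \<in> mcarrier B) \<and>
             (\<forall>i<m. msum B (\<lambda>j. mact B (y j) (r i j)) n = f (a i))) \<longrightarrow>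
        (\<exists>x. (\<forall>j<n. x j \<in> mcarrier A) \<and>
             (\<forall>i<m. msum A (\<lambda>j. mact A (x j) (r i j)) n = a i)))"

text \<open>Pure-injectivity, tested on pure monomorphisms between modules whose elements
  live in the (arbitrary) types 'a and 'b.\<close>
definition pure_injective :: "'a itself \<Rightarrow> 'b itself \<Rightarrow> ('r::ring_1, 'x) rmod \<Rightarrow> bool" where
  "pure_injective _ _ X \<longleftrightarrow> right_module X \<and>
     (\<forall>(A :: ('r, 'a) rmod) (B :: ('r, 'b) rmod) f.
        right_module A \<and> right_module B \<and> pure_mono A B f \<longrightarrow>
        (\<forall>g\<in>rhom A X. \<exists>h\<in>rhom B X. \<forall>a\<in>mcarrier A. h (f a) = g a))"

definition dsum :: "'k set \<Rightarrow> ('r, 'm) rmod \<Rightarrow> ('r, 'k \<Rightarrow> 'm) rmod" where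
  "dsum I T = \<lparr> mcarrier = {u. u \<in> I \<rightarrow>\<^sub>E mcarrier T \<and> finite {i\<in>I. u i \<noteq> mzero T}},
                madd = (\<lambda>u v. restrict (\<lambda>i. madd T (u i) (v i)) I),
                mzero = restrict (\<lambda>i. mzero T) I,
                mact = (\<lambda>u r. restrict (\<lambda>i. mact T (u i) r) I) \<rparr>"

definition sigma_pure_injective :: "'k itself \<Rightarrow> 'a itself \<Rightarrow> 'b itself \<Rightarrow> ('r::ring_1, 'm) rmod \<Rightarrow> bool" where
  "sigma_pure_injective _ _ _ T \<longleftrightarrow>
     (\<forall>I :: 'k set. pure_injective TYPE('a) TYPE('b) (dsum I T))"

end

theory Submission
  imports Defs "HOL-Library.Function_Algebras"
begin

text \<open>
  If every descending chain of pp-definable subgroups of a module X stabilises, X is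
  pure-injective: by Zorn's lemma there is a maximal relation from B to X containing the graph of
  g along the pure monomorphism f and transferring solvability of finite systems of equations; a
  point of B outside its domain can be added by realising in X a pp condition on the point whose
  homogeneous counterpart in X is minimal. Since pp sets of T^(I) are computed componentwise, it
  remains to show that descending chains \<psi>_0 \<ge> \<psi>_0 \<and> \<psi>_1 \<ge> ... of pp sets of T stabilise.
  Let p_n : F_n \<rightarrow> C_n be the left \<C>-approximation of the free realization (F_n, x_n) of \<psi>_n. As T
  is a direct limit of modules in \<C>, pp_set T \<psi>_n consists of the values at p_n x_n of the maps
  C_n \<rightarrow> T. The universal properties give maps C_n \<rightarrow> C_(n+1) sending p_n x_n to p_(n+1) x_(n+1), so
  pp_set T \<psi>_n is the set of values at p_0 x_0 of the image of Hom(C_n, T) in Hom(C_0, T), and the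
  Mittag-Leffler condition makes these images stabilise.
\<close>

section \<open>Right modules\<close>

definition mneg :: "('r::ring_1, 'm) rmod \<Rightarrow> 'm \<Rightarrow> 'm" where
  "mneg M x = (SOME y. y \<in> mcarrier M \<and> madd M x y = mzero M)"

lemma msum_cong: "(\<And>j. j < n \<Longrightarrow> f j = g j) \<Longrightarrow> msum M f n = msum M g n"
  by (induction n) auto

locale rmodule =
  fixes M :: "('r::ring_1, 'm) rmod"
  assumes rmod: "right_module M"
begin

lemma zero_closed[simp]: "mzero M \<in> mcarrier M"
  using rmod unfolding right_module_def by meson
lemma add_closed[simp]: "x \<in> mcarrier M \<Longrightarrow> y \<in> mcarrier M \<Longrightarrow> madd M x y \<in> mcarrier M"
  using rmod unfolding right_module_def by meson
lemma act_closed[simp]: "x \<in> mcarrier M \<Longrightarrow> mact M x r \<in> mcarrier M"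
  using rmod unfolding right_module_def by meson
lemma add_assoc: "x \<in> mcarrier M \<Longrightarrow> y \<in> mcarrier M \<Longrightarrow> z \<in> mcarrier M \<Longrightarrow>
   madd M (madd M x y) z = madd M x (madd M y z)"
  using rmod unfolding right_module_def by meson
lemma add_comm: "x \<in> mcarrier M \<Longrightarrow> y \<in> mcarrier M \<Longrightarrow> madd M x y = madd M y x"
  using rmod unfolding right_module_def by meson
lemma add_zero_l[simp]: "x \<in> mcarrier M \<Longrightarrow> madd M (mzero M) x = x"
  using rmod unfolding right_module_def by meson
lemma add_zero_r[simp]: "x \<in> mcarrier M \<Longrightarrow> madd M x (mzero M) = x"
  using add_comm add_zero_l zero_closed by metis
lemma ex_neg: "x \<in> mcarrier M \<Longrightarrow> \<exists>y\<in>mcarrier M. madd M x y = mzero M"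
  using rmod unfolding right_module_def by meson
lemma act_add: "x \<in> mcarrier M \<Longrightarrow> y \<in> mcarrier M \<Longrightarrow>
   mact M (madd M x y) r = madd M (mact M x r) (mact M y r)"
  using rmod unfolding right_module_def by meson
lemma act_radd: "x \<in> mcarrier M \<Longrightarrow> mact M x (r + s) = madd M (mact M x r) (mact M x s)"
  using rmod unfolding right_module_def by meson
lemma act_mult: "x \<in> mcarrier M \<Longrightarrow> mact M x (r * s) = mact M (mact M x r) s"
  using rmod unfolding right_module_def by meson
lemma act_one[simp]: "x \<in> mcarrier M \<Longrightarrow> mact M x 1 = x"
  using rmod unfolding right_module_def by meson

lemma neg_closed[simp]: "x \<in> mcarrier M \<Longrightarrow> mneg M x \<in> mcarrier M"
  and add_neg_r[simp]: "x \<in> mcarrier M \<Longrightarrow> madd M x (mneg M x) = mzero M"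
  using someI_ex[OF ex_neg[unfolded Bex_def]] unfolding mneg_def by blast+
lemma add_neg_l[simp]: "x \<in> mcarrier M \<Longrightarrow> madd M (mneg M x) x = mzero M"
  using add_comm add_neg_r neg_closed by metis

lemma add_left_cancel:
  assumes "x \<in> mcarrier M" "y \<in> mcarrier M" "z \<in> mcarrier M" "madd M x y = madd M x z"
  shows "y = z"
proof -
  have "madd M (mneg M x) (madd M x y) = madd M (mneg M x) (madd M x z)" using assms by simp
  thus ?thesis using assms add_assoc[of "mneg M x" x y] add_assoc[of "mneg M x" x z] by simp
qed

lemma neg_unique: "x \<in> mcarrier M \<Longrightarrow> y \<in> mcarrier M \<Longrightarrow> madd M x y = mzero M \<Longrightarrow> y = mneg M x"
  using add_left_cancel[of x y "mneg M x"] by simp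

lemma add_eq_zero_iff: "x \<in> mcarrier M \<Longrightarrow> y \<in> mcarrier M \<Longrightarrow>
   (madd M x (mneg M y) = mzero M) = (x = y)"
  by (metis add_neg_r neg_closed neg_unique add_comm)

lemma act_0[simp]: "x \<in> mcarrier M \<Longrightarrow> mact M x 0 = mzero M"
proof -
  assume x: "x \<in> mcarrier M"
  have "madd M (mact M x 0) (mact M x 0) = madd M (mact M x 0) (mzero M)"
    using act_radd[OF x, of 0 0] x by simp
  thus ?thesis using add_left_cancel[of "mact M x 0" "mact M x 0" "mzero M"] x by simp
qed

lemma act_zero[simp]: "mact M (mzero M) r = mzero M"
proof -
  have "madd M (mact M (mzero M) r) (mact M (mzero M) r) = madd M (mact M (mzero M) r) (mzero M)"
    using act_add[of "mzero M" "mzero M" r] by simp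
  thus ?thesis using add_left_cancel[of "mact M (mzero M) r" "mact M (mzero M) r" "mzero M"] by simp
qed

lemma act_uminus: "x \<in> mcarrier M \<Longrightarrow> mact M x (- r) = mneg M (mact M x r)"
  by (rule neg_unique) (auto simp: act_radd[symmetric])

lemma neg_zero[simp]: "mneg M (mzero M) = mzero M"
  by (metis add_zero_l neg_closed add_neg_r zero_closed)

lemma neg_add: "x \<in> mcarrier M \<Longrightarrow> y \<in> mcarrier M \<Longrightarrow>
   mneg M (madd M x y) = madd M (mneg M x) (mneg M y)"
  by (metis act_add act_uminus act_one add_closed)

lemma act_neg: "x \<in> mcarrier M \<Longrightarrow> mact M (mneg M x) r = mneg M (mact M x r)"
  by (metis act_mult act_one act_uminus mult_minus_left mult_1_left)

lemma msum_closed[simp]: "(\<And>j. j < n \<Longrightarrow> f j \<in> mcarrier M) \<Longrightarrow> msum M f n \<in> mcarrier M"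
  by (induction n) auto

lemma msum_add:
  "(\<And>j. j < n \<Longrightarrow> f j \<in> mcarrier M) \<Longrightarrow> (\<And>j. j < n \<Longrightarrow> g j \<in> mcarrier M) \<Longrightarrow>
   msum M (\<lambda>j. madd M (f j) (g j)) n = madd M (msum M f n) (msum M g n)"
proof (induction n)
  case 0 then show ?case by simp
next
  case (Suc n)
  have IH: "msum M (\<lambda>j. madd M (f j) (g j)) n = madd M (msum M f n) (msum M g n)"
    using Suc by auto
  have c: "msum M f n \<in> mcarrier M" "msum M g n \<in> mcarrier M" "f n \<in> mcarrier M" "g n \<in> mcarrier M"
    using Suc.prems by auto
  show ?case using c by (simp add: IH add_assoc) (metis add_assoc add_comm)
qed

lemma msum_zero: "(\<And>j. j < n \<Longrightarrow> f j = mzero M) \<Longrightarrow> msum M f n = mzero M"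
  by (induction n) auto

lemma msum_act:
  "(\<And>j. j < n \<Longrightarrow> f j \<in> mcarrier M) \<Longrightarrow> mact M (msum M f n) r = msum M (\<lambda>j. mact M (f j) r) n"
  by (induction n) (auto simp: act_add)

lemma msum_neg:
  "(\<And>j. j < n \<Longrightarrow> f j \<in> mcarrier M) \<Longrightarrow> mneg M (msum M f n) = msum M (\<lambda>j. mneg M (f j)) n"
  by (induction n) (auto simp: neg_add)

lemma msum_split:
  "(\<And>j. j < a + b \<Longrightarrow> f j \<in> mcarrier M) \<Longrightarrow>
   msum M f (a + b) = madd M (msum M f a) (msum M (\<lambda>j. f (a + j)) b)"
proof (induction b)
  case 0 then show ?case by simp
next
  case (Suc b)
  then show ?case by (simp add: add_assoc)
qed

lemma msum_shift:
  "(\<And>j. j < Suc n \<Longrightarrow> f j \<in> mcarrier M) \<Longrightarrow>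
   msum M f (Suc n) = madd M (f 0) (msum M (\<lambda>j. f (Suc j)) n)"
  using msum_split[of 1 n f] by simp

lemma msum_single:
  assumes "k < n" "f k \<in> mcarrier M" "\<And>j. j < n \<Longrightarrow> j \<noteq> k \<Longrightarrow> f j = mzero M"
  shows "msum M f n = f k"
  using assms
proof (induction n)
  case 0 then show ?case by simp
next
  case (Suc n)
  show ?case
  proof (cases "k = n")
    case True
    have "msum M f n = mzero M" using Suc.prems True by (intro msum_zero) auto
    then show ?thesis using True Suc.prems by simp
  next
    case False
    then have "k < n" using Suc.prems by simp
    then show ?thesis using Suc False by simp
  qed
qed

lemma act_rsum:
  "x \<in> mcarrier M \<Longrightarrow> mact M x (\<Sum>i<m. r i) = msum M (\<lambda>i. mact M x (r i)) m"
  by (induction m) (auto simp: act_radd)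

lemma msum_swap:
  "(\<And>i j. i < n \<Longrightarrow> j < m \<Longrightarrow> f i j \<in> mcarrier M) \<Longrightarrow>
   msum M (\<lambda>i. msum M (\<lambda>j. f i j) m) n = msum M (\<lambda>j. msum M (\<lambda>i. f i j) n) m"
proof (induction n)
  case 0 then show ?case by (simp add: msum_zero)
next
  case (Suc n)
  have "msum M (\<lambda>j. msum M (\<lambda>i. f i j) (Suc n)) m =
        madd M (msum M (\<lambda>j. msum M (\<lambda>i. f i j) n) m) (msum M (\<lambda>j. f n j) m)"
    using Suc.prems by (simp add: msum_add)
  then show ?case using Suc by simp
qed

end

lemma rhom_closed: "h \<in> rhom M N \<Longrightarrow> x \<in> mcarrier M \<Longrightarrow> h x \<in> mcarrier N"
  unfolding rhom_def by auto
lemma rhom_add: "h \<in> rhom M N \<Longrightarrow> x \<in> mcarrier M \<Longrightarrow> y \<in> mcarrier M \<Longrightarrow>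
  h (madd M x y) = madd N (h x) (h y)"
  unfolding rhom_def by auto
lemma rhom_act: "h \<in> rhom M N \<Longrightarrow> x \<in> mcarrier M \<Longrightarrow> h (mact M x r) = mact N (h x) r"
  unfolding rhom_def by auto
lemma rhom_zero: "right_module M \<Longrightarrow> right_module N \<Longrightarrow> h \<in> rhom M N \<Longrightarrow> h (mzero M) = mzero N"
  using rhom_act[of h M N "mzero M" 0] rmodule.act_0[of M] rmodule.act_0[of N] rmodule.zero_closed[of M]
    rhom_closed[of h M N] unfolding rmodule_def by metis

lemma rhom_msum: "right_module M \<Longrightarrow> right_module N \<Longrightarrow> h \<in> rhom M N \<Longrightarrow>
  (\<And>j. j < n \<Longrightarrow> f j \<in> mcarrier M) \<Longrightarrow> h (msum M f n) = msum N (\<lambda>j. h (f j)) n"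
  by (induction n) (auto simp: rhom_zero rhom_add rmodule.msum_closed rmodule_def)

lemma rhom_neg: "right_module M \<Longrightarrow> right_module N \<Longrightarrow> h \<in> rhom M N \<Longrightarrow> x \<in> mcarrier M \<Longrightarrow>
  h (mneg M x) = mneg N (h x)"
  by (metis rhom_act rmodule.act_one rmodule.act_uminus rmodule_def rhom_closed)

lemma rhom_comp: "right_module M1 \<Longrightarrow> u \<in> rhom M1 M2 \<Longrightarrow> v \<in> rhom M2 M3 \<Longrightarrow>
   restrict (v \<circ> u) (mcarrier M1) \<in> rhom M1 M3"
  using rmodule.add_closed[of M1] rmodule.act_closed[of M1] unfolding rhom_def rmodule_def
  by (auto simp: PiE_def Pi_def)

lemma rhom_id: "right_module M \<Longrightarrow> restrict id (mcarrier M) \<in> rhom M M"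
  unfolding rhom_def by (auto simp: rmodule.add_closed rmodule.act_closed rmodule_def)


lemma fin_pres_right_module: "fin_pres M \<Longrightarrow> right_module M"
  by (simp add: fin_pres_def)

definition lin_comb :: "('r::ring_1, 'm) rmod \<Rightarrow> nat \<Rightarrow> (nat \<Rightarrow> 'm) \<Rightarrow> (nat \<Rightarrow> 'r) \<Rightarrow> 'm" where
  "lin_comb M N w u = msum M (\<lambda>j. mact M (w j) (u j)) N"

lemma lin_comb_cong: "(\<And>j. j < n \<Longrightarrow> w j = w' j) \<Longrightarrow> lin_comb M n w u = lin_comb M n w' u"
  unfolding lin_comb_def by (rule msum_cong) simp

lemma (in rmodule) lin_comb_closed: "(\<And>j. j < n \<Longrightarrow> w j \<in> mcarrier M) \<Longrightarrow> lin_comb M n w u \<in> mcarrier M"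
  unfolding lin_comb_def by simp

lemma rhom_lin_comb:
  assumes "right_module M" "right_module N" "h \<in> rhom M N" "\<And>j. j < n \<Longrightarrow> w j \<in> mcarrier M"
  shows "h (lin_comb M n w u) = lin_comb N n (\<lambda>j. h (w j)) u"
  unfolding lin_comb_def using assms
  by (simp add: rhom_msum rhom_act rmodule.act_closed rmodule.intro cong: msum_cong)

definition unit_vec :: "nat \<Rightarrow> nat \<Rightarrow> 'r::ring_1" where
  "unit_vec i = (\<lambda>j. if j = i then 1 else 0)"

context rmodule begin

lemma lin_comb_add_coeffs:
  "(\<And>j. j < n \<Longrightarrow> w j \<in> mcarrier M) \<Longrightarrow>
   lin_comb M n w (u + u') = madd M (lin_comb M n w u) (lin_comb M n w u')"
  unfolding lin_comb_def by (simp add: act_radd msum_add[symmetric] cong: msum_cong)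

lemma lin_comb_mult_coeffs:
  "(\<And>j. j < n \<Longrightarrow> w j \<in> mcarrier M) \<Longrightarrow> lin_comb M n w (\<lambda>j. u j * r) = mact M (lin_comb M n w u) r"
  unfolding lin_comb_def by (simp add: act_mult msum_act cong: msum_cong)

lemma lin_comb_unit_vec: "k < n \<Longrightarrow> (\<And>j. j < n \<Longrightarrow> w j \<in> mcarrier M) \<Longrightarrow> lin_comb M n w (unit_vec k) = w k"
  unfolding lin_comb_def by (subst msum_single[of k]) (auto simp: unit_vec_def)

end

section \<open>Positive primitive formulas\<close>

text \<open>(N, m, E) encodes the pp formula \<exists>x_1 ... x_(N-1). \<forall>i<m. \<Sum>j<N. x_j E i j = 0 in the free
  variable x_0.\<close>
type_synonym 'r ppf = "nat \<times> nat \<times> (nat \<Rightarrow> nat \<Rightarrow> 'r)"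

definition solves :: "('r::ring_1, 'm) rmod \<Rightarrow> 'r ppf \<Rightarrow> (nat \<Rightarrow> 'm) \<Rightarrow> bool" where
  "solves M \<phi> w \<longleftrightarrow> (case \<phi> of (N, m, E) \<Rightarrow> (\<forall>j<N. w j \<in> mcarrier M) \<and>
      (\<forall>i<m. msum M (\<lambda>j. mact M (w j) (E i j)) N = mzero M))"

definition pp_set :: "('r::ring_1, 'm) rmod \<Rightarrow> 'r ppf \<Rightarrow> 'm set" where
  "pp_set M \<phi> = {x \<in> mcarrier M. \<exists>w. solves M \<phi> w \<and> w 0 = x}"

lemma solves_iff: "solves M (N, m, E) w \<longleftrightarrow> (\<forall>j<N. w j \<in> mcarrier M) \<and>
      (\<forall>i<m. msum M (\<lambda>j. mact M (w j) (E i j)) N = mzero M)"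
  by (simp add: solves_def)

lemma solves_cong: "(\<And>j. j < fst \<phi> \<Longrightarrow> w j = w' j) \<Longrightarrow> solves M \<phi> w = solves M \<phi> w'"
proof -
  assume a: "\<And>j. j < fst \<phi> \<Longrightarrow> w j = w' j"
  obtain N m E where p: "\<phi> = (N, m, E)" by (cases \<phi>) auto
  have "\<And>i. msum M (\<lambda>j. mact M (w j) (E i j)) N = msum M (\<lambda>j. mact M (w' j) (E i j)) N"
    using a p by (intro msum_cong) auto
  then show ?thesis using a p by (auto simp: solves_iff)
qed

lemma solves_rhom:
  assumes "right_module M" "right_module M'" "h \<in> rhom M M'" "solves M \<phi> w"
  shows "solves M' \<phi> (\<lambda>j. h (w j))"
proof -
  obtain N m E where p: "\<phi> = (N, m, E)" by (cases \<phi>) auto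
  have w: "\<And>j. j < N \<Longrightarrow> w j \<in> mcarrier M" and e: "\<And>i. i < m \<Longrightarrow> lin_comb M N w (E i) = mzero M"
    using assms(4) p by (auto simp: solves_iff lin_comb_def)
  have "lin_comb M' N (\<lambda>j. h (w j)) (E i) = mzero M'" if "i < m" for i
    using rhom_lin_comb[of M M' h N w "E i", OF assms(1-3) w] e[OF that] rhom_zero[OF assms(1-3)] by simp
  then show ?thesis using p w rhom_closed[OF assms(3)] by (auto simp: solves_iff lin_comb_def)
qed

lemma pp_set_rhom:
  assumes "right_module M" "right_module M'" "h \<in> rhom M M'" "x \<in> pp_set M \<phi>"
  shows "h x \<in> pp_set M' \<phi>"
proof -
  obtain w where "solves M \<phi> w" "w 0 = x" "x \<in> mcarrier M" using assms(4) by (auto simp: pp_set_def)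
  then show ?thesis using solves_rhom[OF assms(1-3)] rhom_closed[OF assms(3)]
    unfolding pp_set_def by blast
qed

lemma solves_carrier: "solves M \<phi> w \<Longrightarrow> j < fst \<phi> \<Longrightarrow> w j \<in> mcarrier M"
  by (cases \<phi>) (auto simp: solves_iff)

context rmodule begin

lemma solves_zero: "solves M \<phi> (\<lambda>j. mzero M)"
  by (cases \<phi>) (auto simp: solves_iff intro!: msum_zero)

lemma solves_add:
  assumes "solves M \<phi> w1" "solves M \<phi> w2"
  shows "solves M \<phi> (\<lambda>j. madd M (w1 j) (w2 j))"
proof -
  obtain N m E where p: "\<phi> = (N, m, E)" by (cases \<phi>) auto
  have c: "\<And>j. j < N \<Longrightarrow> w1 j \<in> mcarrier M" "\<And>j. j < N \<Longrightarrow> w2 j \<in> mcarrier M"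
    using assms p by (auto simp: solves_iff)
  have "\<And>i. i < m \<Longrightarrow> msum M (\<lambda>j. mact M (madd M (w1 j) (w2 j)) (E i j)) N = mzero M"
  proof -
    fix i assume i: "i < m"
    have "msum M (\<lambda>j. mact M (madd M (w1 j) (w2 j)) (E i j)) N =
          msum M (\<lambda>j. madd M (mact M (w1 j) (E i j)) (mact M (w2 j) (E i j))) N"
      using c by (intro msum_cong) (auto simp: act_add)
    also have "\<dots> = madd M (msum M (\<lambda>j. mact M (w1 j) (E i j)) N) (msum M (\<lambda>j. mact M (w2 j) (E i j)) N)"
      using c by (intro msum_add) auto
    also have "\<dots> = mzero M" using assms p i by (simp add: solves_iff)
    finally show "?thesis i" .
  qed
  then show ?thesis using c p by (auto simp: solves_iff)
qed

lemma solves_neg: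
  assumes "solves M \<phi> w"
  shows "solves M \<phi> (\<lambda>j. mneg M (w j))"
proof -
  obtain N m E where p: "\<phi> = (N, m, E)" by (cases \<phi>) auto
  have c: "\<And>j. j < N \<Longrightarrow> w j \<in> mcarrier M"
    using assms p by (auto simp: solves_iff)
  have "\<And>i. i < m \<Longrightarrow> msum M (\<lambda>j. mact M (mneg M (w j)) (E i j)) N = mzero M"
  proof -
    fix i assume i: "i < m"
    have "msum M (\<lambda>j. mact M (mneg M (w j)) (E i j)) N =
          msum M (\<lambda>j. mneg M (mact M (w j) (E i j))) N"
      using c by (intro msum_cong) (auto simp: act_neg)
    also have "\<dots> = mneg M (msum M (\<lambda>j. mact M (w j) (E i j)) N)"
      using c by (intro msum_neg[symmetric]) auto
    also have "\<dots> = mzero M" using assms p i by (simp add: solves_iff)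
    finally show "?thesis i" .
  qed
  then show ?thesis using c p by (auto simp: solves_iff)
qed

end

lemma all_less_add_iff: "(\<forall>i<a + b. P i) \<longleftrightarrow> (\<forall>i<a. P i) \<and> (\<forall>i<b. P (a + i))" for a b :: nat
proof (intro iffI conjI allI impI)
  fix i assume "(\<forall>i<a. P i) \<and> (\<forall>i<b. P (a + i))" and "i < a + b"
  then show "P i" by (cases "i < a") (auto dest: spec[of _ "i - a"])
qed auto

definition conj_matrix ::
  "nat \<Rightarrow> nat \<Rightarrow> nat \<Rightarrow> (nat \<Rightarrow> nat \<Rightarrow> 'r) \<Rightarrow> (nat \<Rightarrow> nat \<Rightarrow> 'r) \<Rightarrow> nat \<Rightarrow> nat \<Rightarrow> 'r::ring_1" where
  "conj_matrix N1 m1 m2 E1 E2 i j =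
     (if i < m1 then (if j < N1 then E1 i j else 0)
      else if i < m1 + m2 then (if N1 \<le> j then E2 (i - m1) (j - N1) else 0)
      else (if j = 0 then 1 else if j = N1 then -1 else 0))"

definition ppf_conj :: "'r::ring_1 ppf \<Rightarrow> 'r ppf \<Rightarrow> 'r ppf" where
  "ppf_conj \<phi>1 \<phi>2 = (case \<phi>1 of (N1, m1, E1) \<Rightarrow> case \<phi>2 of (N2, m2, E2) \<Rightarrow>
     (N1 + N2, m1 + m2 + 1, conj_matrix N1 m1 m2 E1 E2))"

lemma fst_ppf_conj: "fst (ppf_conj \<phi>1 \<phi>2) = fst \<phi>1 + fst \<phi>2"
  by (cases \<phi>1; cases \<phi>2) (simp add: ppf_conj_def)

context rmodule begin

lemma msum_conj_matrix_split:
  assumes "\<And>j. j < N1 + N2 \<Longrightarrow> w j \<in> mcarrier M"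
  shows "msum M (\<lambda>j. mact M (w j) (conj_matrix N1 m1 m2 E1 E2 i j)) (N1 + N2) =
    madd M (msum M (\<lambda>j. mact M (w j) (conj_matrix N1 m1 m2 E1 E2 i j)) N1)
      (msum M (\<lambda>j. mact M (w (N1 + j)) (conj_matrix N1 m1 m2 E1 E2 i (N1 + j))) N2)"
  using assms by (intro msum_split) auto

lemma msum_conj_matrix_left:
  assumes "\<And>j. j < N1 + N2 \<Longrightarrow> w j \<in> mcarrier M" "i < m1"
  shows "msum M (\<lambda>j. mact M (w j) (conj_matrix N1 m1 m2 E1 E2 i j)) (N1 + N2) =
    msum M (\<lambda>j. mact M (w j) (E1 i j)) N1"
proof -
  have "msum M (\<lambda>j. mact M (w (N1 + j)) (conj_matrix N1 m1 m2 E1 E2 i (N1 + j))) N2 = mzero M"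
    using assms by (intro msum_zero) (auto simp: conj_matrix_def)
  moreover have "msum M (\<lambda>j. mact M (w j) (conj_matrix N1 m1 m2 E1 E2 i j)) N1 =
      msum M (\<lambda>j. mact M (w j) (E1 i j)) N1"
    using assms by (intro msum_cong) (auto simp: conj_matrix_def)
  ultimately show ?thesis using assms by (simp add: msum_conj_matrix_split)
qed

lemma msum_conj_matrix_right:
  assumes "\<And>j. j < N1 + N2 \<Longrightarrow> w j \<in> mcarrier M" "i < m2"
  shows "msum M (\<lambda>j. mact M (w j) (conj_matrix N1 m1 m2 E1 E2 (m1 + i) j)) (N1 + N2) =
    msum M (\<lambda>j. mact M (w (N1 + j)) (E2 i j)) N2"
proof -
  have "msum M (\<lambda>j. mact M (w j) (conj_matrix N1 m1 m2 E1 E2 (m1 + i) j)) N1 = mzero M"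
    using assms by (intro msum_zero) (auto simp: conj_matrix_def)
  moreover have "msum M (\<lambda>j. mact M (w (N1 + j)) (conj_matrix N1 m1 m2 E1 E2 (m1 + i) (N1 + j))) N2 =
      msum M (\<lambda>j. mact M (w (N1 + j)) (E2 i j)) N2"
    using assms by (intro msum_cong) (auto simp: conj_matrix_def)
  ultimately show ?thesis using assms by (simp add: msum_conj_matrix_split)
qed

lemma msum_conj_matrix_last:
  assumes "\<And>j. j < N1 + N2 \<Longrightarrow> w j \<in> mcarrier M" "0 < N1" "0 < N2"
  shows "msum M (\<lambda>j. mact M (w j) (conj_matrix N1 m1 m2 E1 E2 (m1 + m2) j)) (N1 + N2) =
    madd M (w 0) (mneg M (w N1))"
proof -
  have "msum M (\<lambda>j. mact M (w j) (conj_matrix N1 m1 m2 E1 E2 (m1 + m2) j)) N1 = w 0"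
    using assms by (subst msum_single[of 0]) (auto simp: conj_matrix_def)
  moreover have "msum M (\<lambda>j. mact M (w (N1 + j)) (conj_matrix N1 m1 m2 E1 E2 (m1 + m2) (N1 + j))) N2 =
      mneg M (w N1)"
    using assms by (subst msum_single[of 0]) (auto simp: conj_matrix_def act_uminus)
  ultimately show ?thesis using assms by (simp add: msum_conj_matrix_split)
qed

lemma solves_conj:
  assumes "\<phi>1 = (N1, m1, E1)" "\<phi>2 = (N2, m2, E2)" "0 < N1" "0 < N2"
  shows "solves M (ppf_conj \<phi>1 \<phi>2) w \<longleftrightarrow> solves M \<phi>1 w \<and> solves M \<phi>2 (\<lambda>j. w (N1 + j)) \<and> w 0 = w N1"
proof (cases "\<forall>j<N1 + N2. w j \<in> mcarrier M")
  case False
  then obtain j where "j < N1 + N2" "w j \<notin> mcarrier M" by auto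
  then show ?thesis using assms
    by (cases "j < N1") (auto simp: ppf_conj_def solves_iff dest: spec[of _ "j - N1"])
next
  case True
  then have car: "\<And>j. j < N1 + N2 \<Longrightarrow> w j \<in> mcarrier M" by blast
  have "w 0 \<in> mcarrier M" "w N1 \<in> mcarrier M" using car assms by auto
  then have "madd M (w 0) (mneg M (w N1)) = mzero M \<longleftrightarrow> w 0 = w N1"
    by (rule add_eq_zero_iff)
  then show ?thesis using True assms
    by (auto simp: ppf_conj_def solves_iff All_less_Suc all_less_add_iff msum_conj_matrix_left[OF car]
        msum_conj_matrix_right[OF car] msum_conj_matrix_last[OF car assms(3,4)])
qed

end

lemma (in rmodule) pp_set_conj:
  assumes "0 < fst \<phi>1" "0 < fst \<phi>2"
  shows "pp_set M (ppf_conj \<phi>1 \<phi>2) = pp_set M \<phi>1 \<inter> pp_set M \<phi>2"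
proof -
  obtain N1 m1 E1 where p1: "\<phi>1 = (N1, m1, E1)" by (cases \<phi>1) auto
  obtain N2 m2 E2 where p2: "\<phi>2 = (N2, m2, E2)" by (cases \<phi>2) auto
  note sc = solves_conj[OF p1 p2]
  show ?thesis
  proof
    show "pp_set M (ppf_conj \<phi>1 \<phi>2) \<subseteq> pp_set M \<phi>1 \<inter> pp_set M \<phi>2"
      using sc assms p1 p2 unfolding pp_set_def by fastforce
  next
    show "pp_set M \<phi>1 \<inter> pp_set M \<phi>2 \<subseteq> pp_set M (ppf_conj \<phi>1 \<phi>2)"
    proof
      fix x assume "x \<in> pp_set M \<phi>1 \<inter> pp_set M \<phi>2"
      then obtain w1 w2 where w: "solves M \<phi>1 w1" "w1 0 = x" "solves M \<phi>2 w2" "w2 0 = x" "x \<in> mcarrier M"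
        unfolding pp_set_def by auto
      define w where "w = (\<lambda>j. if j < N1 then w1 j else w2 (j - N1))"
      have "solves M \<phi>1 w" using w(1) p1 by (subst solves_cong[of _ w w1]) (auto simp: w_def)
      moreover have "solves M \<phi>2 (\<lambda>j. w (N1 + j))" using w(3)
        by (subst solves_cong[of _ _ w2]) (auto simp: w_def)
      ultimately have "solves M (ppf_conj \<phi>1 \<phi>2) w" using sc assms p1 p2 w by (auto simp: w_def)
      moreover have "w 0 = x" using assms p1 w by (simp add: w_def)
      ultimately show "x \<in> pp_set M (ppf_conj \<phi>1 \<phi>2)" using w(5) unfolding pp_set_def by auto
    qed
  qed
qed


section \<open>Free realizations\<close>

lemma sum_fun_apply: "(\<Sum>a\<in>A. f a) x = (\<Sum>a\<in>A. f a x)"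
  by (induction A rule: infinite_finite_induct) auto

definition fin_vecs :: "nat \<Rightarrow> (nat \<Rightarrow> 'r::ring_1) set" where
  "fin_vecs N = {v. \<forall>j\<ge>N. v j = 0}"

definition rel_span :: "'r::ring_1 ppf \<Rightarrow> (nat \<Rightarrow> 'r) set" where
  "rel_span \<phi> = (case \<phi> of (N, m, E) \<Rightarrow> {v. \<exists>s. v = (\<lambda>j. if j < N then (\<Sum>i<m. E i j * s i) else 0)})"

definition coset_of :: "'r::ring_1 ppf \<Rightarrow> (nat \<Rightarrow> 'r) \<Rightarrow> (nat \<Rightarrow> 'r) set" where
  "coset_of \<phi> v = {v' \<in> fin_vecs (fst \<phi>). v' - v \<in> rel_span \<phi>}"

text \<open>R^N modulo the span of the rows of E, with generic point the class of the first unit vector.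
  Its elements are cosets, i.e. sets of vectors, because cov_finite only speaks about modules
  of that element type.\<close>
definition free_realization :: "'r::ring_1 ppf \<Rightarrow> ('r, (nat \<Rightarrow> 'r) set) rmod" where
  "free_realization \<phi> = \<lparr> mcarrier = coset_of \<phi> ` fin_vecs (fst \<phi>),
     madd = (\<lambda>U W. {z \<in> fin_vecs (fst \<phi>). \<exists>u\<in>U. \<exists>w\<in>W. z - (u + w) \<in> rel_span \<phi>}),
     mzero = rel_span \<phi>,
     mact = (\<lambda>U r. {z \<in> fin_vecs (fst \<phi>). \<exists>u\<in>U. z - (\<lambda>j. u j * r) \<in> rel_span \<phi>}) \<rparr>"


locale ppf_presentation =
  fixes \<phi> :: "'r::ring_1 ppf" and N m E
  assumes ppf_eq: "\<phi> = (N, m, E)"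
begin

lemma fst_eq: "fst \<phi> = N" using ppf_eq by simp

lemma rel_span_eq: "rel_span \<phi> = {v. \<exists>s. v = (\<lambda>j. if j < N then (\<Sum>i<m. E i j * s i) else 0)}"
  using ppf_eq by (simp add: rel_span_def)

lemma rel_span_fin_vecs: "v \<in> rel_span \<phi> \<Longrightarrow> v \<in> fin_vecs N"
  by (auto simp: rel_span_eq fin_vecs_def)

lemma rel_span_zero: "0 \<in> rel_span \<phi>"
  unfolding rel_span_eq by (rule CollectI, rule exI[of _ "\<lambda>_. 0"]) (auto simp: fun_eq_iff)

lemma rel_span_add: "u \<in> rel_span \<phi> \<Longrightarrow> v \<in> rel_span \<phi> \<Longrightarrow> u + v \<in> rel_span \<phi>"
proof -
  assume "u \<in> rel_span \<phi>" "v \<in> rel_span \<phi>"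
  then obtain s t where st: "u = (\<lambda>j. if j < N then (\<Sum>i<m. E i j * s i) else 0)"
    "v = (\<lambda>j. if j < N then (\<Sum>i<m. E i j * t i) else 0)" by (auto simp: rel_span_eq)
  show ?thesis unfolding rel_span_eq
    by (rule CollectI, rule exI[of _ "\<lambda>i. s i + t i"])
        (auto simp: st fun_eq_iff distrib_left sum.distrib)
qed

lemma rel_span_mult: "u \<in> rel_span \<phi> \<Longrightarrow> (\<lambda>j. u j * r) \<in> rel_span \<phi>"
proof -
  assume "u \<in> rel_span \<phi>"
  then obtain s where st: "u = (\<lambda>j. if j < N then (\<Sum>i<m. E i j * s i) else 0)"
    by (auto simp: rel_span_eq)
  show ?thesis unfolding rel_span_eq
    by (rule CollectI, rule exI[of _ "\<lambda>i. s i * r"])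
        (auto simp: st fun_eq_iff sum_distrib_right mult.assoc)
qed

lemma rel_span_uminus: "u \<in> rel_span \<phi> \<Longrightarrow> - u \<in> rel_span \<phi>"
  using rel_span_mult[of u "-1"] by (simp add: fun_Compl_def)

lemma rel_span_diff: "u \<in> rel_span \<phi> \<Longrightarrow> v \<in> rel_span \<phi> \<Longrightarrow> u - v \<in> rel_span \<phi>"
  using rel_span_add[of u "- v"] rel_span_uminus[of v] by simp

lemma fin_vecs_add: "u \<in> fin_vecs N \<Longrightarrow> v \<in> fin_vecs N \<Longrightarrow> u + v \<in> fin_vecs N"
  by (auto simp: fin_vecs_def)
lemma fin_vecs_mult: "u \<in> fin_vecs N \<Longrightarrow> (\<lambda>j. u j * r) \<in> fin_vecs N"
  by (auto simp: fin_vecs_def)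
lemma fin_vecs_uminus: "u \<in> fin_vecs N \<Longrightarrow> - u \<in> fin_vecs N"
  by (auto simp: fin_vecs_def)
lemma fin_vecs_zero: "0 \<in> fin_vecs N"
  by (auto simp: fin_vecs_def)

lemma coset_of_eq: "coset_of \<phi> v = {v' \<in> fin_vecs N. v' - v \<in> rel_span \<phi>}"
  using ppf_eq by (simp add: coset_of_def)

lemma coset_of_self: "v \<in> fin_vecs N \<Longrightarrow> v \<in> coset_of \<phi> v"
  using rel_span_zero by (simp add: coset_of_eq)

lemma coset_of_eq_iff: "u \<in> fin_vecs N \<Longrightarrow> v \<in> fin_vecs N \<Longrightarrow> coset_of \<phi> u
    = coset_of \<phi> v \<longleftrightarrow> u - v \<in> rel_span \<phi>"
proof
  assume u: "u \<in> fin_vecs N" and v: "v \<in> fin_vecs N"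
  { assume "coset_of \<phi> u = coset_of \<phi> v"
    then have "u \<in> coset_of \<phi> v" using coset_of_self[OF u] by simp
    then show "u - v \<in> rel_span \<phi>" by (simp add: coset_of_eq) }
  { assume d: "u - v \<in> rel_span \<phi>"
    show "coset_of \<phi> u = coset_of \<phi> v"
    proof (auto simp: coset_of_eq)
      fix x assume "x - u \<in> rel_span \<phi>" then have "(x - u) + (u - v) \<in> rel_span \<phi>"
        using rel_span_add[OF _ d] by blast
      then show "x - v \<in> rel_span \<phi>" by (simp add: algebra_simps)
    next
      fix x assume "x - v \<in> rel_span \<phi>" then have "(x - v) - (u - v) \<in> rel_span \<phi>"
        using rel_span_diff[OF _ d] by blast
      then show "x - u \<in> rel_span \<phi>" by (simp add: algebra_simps)
    qed }
qed

lemma coset_of_zero: "coset_of \<phi> 0 = rel_span \<phi>"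
  using rel_span_fin_vecs by (auto simp: coset_of_eq)

lemma free_realization_carrier: "mcarrier (free_realization \<phi>) = coset_of \<phi> ` fin_vecs N"
  using ppf_eq by (simp add: free_realization_def)
lemma free_realization_zero: "mzero (free_realization \<phi>) = rel_span \<phi>"
  using ppf_eq by (simp add: free_realization_def)

lemma free_realization_add: "u \<in> fin_vecs N \<Longrightarrow> v \<in> fin_vecs N
    \<Longrightarrow> madd (free_realization \<phi>) (coset_of \<phi> u) (coset_of \<phi> v) = coset_of \<phi> (u + v)"
proof -
  assume u: "u \<in> fin_vecs N" and v: "v \<in> fin_vecs N"
  have key: "z - (u + v) \<in> rel_span \<phi>" if "u' - u \<in> rel_span \<phi>" "v' - v \<in> rel_span \<phi>"
      "z - (u' + v') \<in> rel_span \<phi>" for z u' v'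
  proof -
    have "(u' - u) + (v' - v) \<in> rel_span \<phi>" using rel_span_add[OF that(1,2)] .
    then have "(z - (u' + v')) + ((u' - u) + (v' - v)) \<in> rel_span \<phi>" using rel_span_add[OF that(3)]
      by blast
    then show ?thesis by (simp add: algebra_simps)
  qed
  show ?thesis
  proof (intro set_eqI iffI)
    fix z assume "z \<in> madd (free_realization \<phi>) (coset_of \<phi> u) (coset_of \<phi> v)"
    then show "z \<in> coset_of \<phi> (u + v)" using key by (auto simp: free_realization_def coset_of_eq fst_eq)
  next
    fix z assume z: "z \<in> coset_of \<phi> (u + v)"
    have "z \<in> fin_vecs N \<and> (\<exists>u'\<in>coset_of \<phi> u. \<exists>w\<in>coset_of \<phi> v. z - (u' + w) \<in> rel_span \<phi>)"
      by (intro conjI bexI[of _ u] bexI[of _ v])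
          (use z coset_of_self[OF u] coset_of_self[OF v] in \<open>auto simp: coset_of_eq\<close>)
    then show "z \<in> madd (free_realization \<phi>) (coset_of \<phi> u) (coset_of \<phi> v)"
      by (simp add: free_realization_def fst_eq)
  qed
qed

lemma free_realization_act: "u \<in> fin_vecs N \<Longrightarrow> mact (free_realization \<phi>) (coset_of \<phi> u) r
    = coset_of \<phi> (\<lambda>j. u j * r)"
proof -
  assume u: "u \<in> fin_vecs N"
  have key: "z - (\<lambda>j. u j * r) \<in> rel_span \<phi>" if "u' - u \<in> rel_span \<phi>"
      "z - (\<lambda>j. u' j * r) \<in> rel_span \<phi>" for z u'
  proof -
    have d: "(\<lambda>j. u' j * r) - (\<lambda>j. u j * r) \<in> rel_span \<phi>" using rel_span_mult[OF that(1), of r]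
      by (simp add: algebra_simps fun_diff_def)
    have "(z - (\<lambda>j. u' j * r)) + ((\<lambda>j. u' j * r) - (\<lambda>j. u j * r)) \<in> rel_span \<phi>"
      using rel_span_add[OF that(2) d] .
    then show ?thesis by (simp add: algebra_simps)
  qed
  show ?thesis
  proof (intro set_eqI iffI)
    fix z assume "z \<in> mact (free_realization \<phi>) (coset_of \<phi> u) r"
    then show "z \<in> coset_of \<phi> (\<lambda>j. u j * r)" using key
      by (auto simp: free_realization_def coset_of_eq fst_eq)
  next
    fix z assume z: "z \<in> coset_of \<phi> (\<lambda>j. u j * r)"
    then show "z \<in> mact (free_realization \<phi>) (coset_of \<phi> u) r"
      using coset_of_self[OF u] by (auto simp: free_realization_def coset_of_eq fst_eq)
  qed
qed

lemma free_realization_module: "right_module (free_realization \<phi>)"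
proof -
  have C: "mcarrier (free_realization \<phi>) = coset_of \<phi> ` fin_vecs N" by (rule free_realization_carrier)
  have Z: "mzero (free_realization \<phi>) = coset_of \<phi> 0" by (simp add: free_realization_zero coset_of_zero)
  show ?thesis unfolding right_module_def C Z
  proof (intro conjI ballI allI)
    show "coset_of \<phi> 0 \<in> coset_of \<phi> ` fin_vecs N" using fin_vecs_zero by blast
  next
    fix x y assume "x \<in> coset_of \<phi> ` fin_vecs N" "y \<in> coset_of \<phi> ` fin_vecs N"
    then show "madd (free_realization \<phi>) x y \<in> coset_of \<phi> ` fin_vecs N"
      by (auto simp: free_realization_add fin_vecs_add)
  next
    fix x r assume "x \<in> coset_of \<phi> ` fin_vecs N"
    then show "mact (free_realization \<phi>) x r \<in> coset_of \<phi> ` fin_vecs N"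
      by (auto simp: free_realization_act fin_vecs_mult)
  next
    fix x y z assume "x \<in> coset_of \<phi> ` fin_vecs N" "y \<in> coset_of \<phi> ` fin_vecs N"
        "z \<in> coset_of \<phi> ` fin_vecs N"
    then show "madd (free_realization \<phi>) (madd (free_realization \<phi>) x y) z
        = madd (free_realization \<phi>) x (madd (free_realization \<phi>) y z)"
      by (auto simp: free_realization_add fin_vecs_add add.assoc)
  next
    fix x y assume "x \<in> coset_of \<phi> ` fin_vecs N" "y \<in> coset_of \<phi> ` fin_vecs N"
    then show "madd (free_realization \<phi>) x y = madd (free_realization \<phi>) y x"
      by (auto simp: free_realization_add add.commute)
  next
    fix x assume "x \<in> coset_of \<phi> ` fin_vecs N"
    then obtain u where u: "u \<in> fin_vecs N" "x = coset_of \<phi> u" by blast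
    then show "madd (free_realization \<phi>) (coset_of \<phi> 0) x = x"
      using free_realization_add[OF fin_vecs_zero u(1)] by simp
  next
    fix x assume "x \<in> coset_of \<phi> ` fin_vecs N"
    then obtain u where u: "u \<in> fin_vecs N" "x = coset_of \<phi> u" by blast
    then show "\<exists>y\<in>coset_of \<phi> ` fin_vecs N. madd (free_realization \<phi>) x y = coset_of \<phi> 0"
      using fin_vecs_uminus[OF u(1)]
      by (intro bexI[of _ "coset_of \<phi> (- u)"]) (auto simp: free_realization_add)
  next
    fix x y r assume "x \<in> coset_of \<phi> ` fin_vecs N" "y \<in> coset_of \<phi> ` fin_vecs N"
    then obtain u u' where u: "u \<in> fin_vecs N" "x = coset_of \<phi> u" "u' \<in> fin_vecs N"
      "y = coset_of \<phi> u'" by blast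
    have e: "(\<lambda>j. (u + u') j * r) = (\<lambda>j. u j * r) + (\<lambda>j. u' j * r)"
      by (simp add: fun_eq_iff distrib_right)
    show "mact (free_realization \<phi>) (madd (free_realization \<phi>) x y) r
        = madd (free_realization \<phi>) (mact (free_realization \<phi>) x r) (mact (free_realization \<phi>) y r)"
      unfolding u free_realization_add[OF u(1,3)] free_realization_act[OF fin_vecs_add[OF u(1,3)]]
          free_realization_act[OF u(1)] free_realization_act[OF u(3)]
        free_realization_add[OF fin_vecs_mult[OF u(1)] fin_vecs_mult[OF u(3)]] e ..
  next
    fix x r s assume "x \<in> coset_of \<phi> ` fin_vecs N"
    then obtain u where u: "u \<in> fin_vecs N" "x = coset_of \<phi> u" by blast
    have e: "(\<lambda>j. u j * (r + s)) = (\<lambda>j. u j * r) + (\<lambda>j. u j * s)" by (simp add: fun_eq_iff distrib_left)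
    show "mact (free_realization \<phi>) x (r + s)
        = madd (free_realization \<phi>) (mact (free_realization \<phi>) x r) (mact (free_realization \<phi>) x s)"
      unfolding u free_realization_act[OF u(1)]
          free_realization_add[OF fin_vecs_mult[OF u(1)] fin_vecs_mult[OF u(1)]] e ..
  next
    fix x r s assume "x \<in> coset_of \<phi> ` fin_vecs N"
    then show "mact (free_realization \<phi>) x (r * s)
        = mact (free_realization \<phi>) (mact (free_realization \<phi>) x r) s"
      by (auto simp: free_realization_act fin_vecs_mult mult.assoc)
  next
    fix x assume "x \<in> coset_of \<phi> ` fin_vecs N"
    then show "mact (free_realization \<phi>) x 1 = x" by (auto simp: free_realization_act)
  qed
qed

lemma unit_vec_fin_vecs: "i < N \<Longrightarrow> unit_vec i \<in> fin_vecs N"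
  by (auto simp: unit_vec_def fin_vecs_def)

lemma msum_coset_of: "(\<And>j. j < n \<Longrightarrow> f j \<in> fin_vecs N) \<Longrightarrow>
   msum (free_realization \<phi>) (\<lambda>j. coset_of \<phi> (f j)) n = coset_of \<phi> (\<Sum>j<n. f j)"
proof (induction n)
  case 0 then show ?case using coset_of_zero by (simp add: free_realization_zero zero_fun_def)
next
  case (Suc n)
  have "(\<Sum>j<n. f j) \<in> fin_vecs N" using Suc.prems by (auto simp: fin_vecs_def sum_fun_apply)
  then show ?case using Suc by (simp add: free_realization_add plus_fun_def)
qed

lemma msum_generators:
    "msum (free_realization \<phi>) (\<lambda>j. mact (free_realization \<phi>) (coset_of \<phi> (unit_vec j)) (c j)) N
        = coset_of \<phi> (\<lambda>l. if l < N then c l else 0)"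
proof -
  have "msum (free_realization \<phi>) (\<lambda>j. mact (free_realization \<phi>) (coset_of \<phi> (unit_vec j)) (c j)) N =
        msum (free_realization \<phi>) (\<lambda>j. coset_of \<phi> (\<lambda>l. unit_vec j l * c j)) N"
    by (intro msum_cong) (simp add: free_realization_act unit_vec_fin_vecs)
  also have "\<dots> = coset_of \<phi> (\<Sum>j<N. (\<lambda>l. unit_vec j l * c j))"
    by (intro msum_coset_of) (simp add: fin_vecs_mult unit_vec_fin_vecs)
  also have "(\<Sum>j<N. (\<lambda>l. unit_vec j l * c j)) = (\<lambda>l. if l < N then c l else 0)"
  proof (rule ext)
    fix l
    have "(\<Sum>j<N. (\<lambda>l. unit_vec j l * c j)) l = (\<Sum>j<N. unit_vec j l * c j)" by (rule sum_fun_apply)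
    also have "\<dots> = (\<Sum>j<N. if l = j then c j else 0)" by (rule sum.cong) (auto simp: unit_vec_def)
    also have "\<dots> = (if l < N then c l else 0)" by (simp add: sum.delta)
    finally show "(\<Sum>j<N. (\<lambda>l. unit_vec j l * c j)) l = (if l < N then c l else 0)" .
  qed
  finally show ?thesis .
qed

lemma row_rel_span: "i < m \<Longrightarrow> (\<lambda>l. if l < N then E i l else 0) \<in> rel_span \<phi>"
proof -
  assume i: "i < m"
  have "\<And>l. (\<Sum>k<m. E k l * (if k = i then 1 else 0)) = (\<Sum>k<m. if k = i then E k l else 0)"
    by (rule sum.cong) auto
  then have "\<And>l. (\<Sum>k<m. E k l * (if k = i then 1 else 0)) = E i l" using i by (simp add: sum.delta')
  then show ?thesis unfolding rel_span_eq
    by (intro CollectI exI[of _ "\<lambda>k. if k = i then 1 else 0"]) (simp add: fun_eq_iff)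
qed

lemma coset_of_rel_span: "v \<in> rel_span \<phi> \<Longrightarrow> coset_of \<phi> v = rel_span \<phi>"
  using coset_of_eq_iff[of v 0] rel_span_fin_vecs[of v] fin_vecs_zero coset_of_zero by simp

lemma fin_pres_free_realization: "fin_pres (free_realization \<phi>)"
proof -
  let ?F = "free_realization \<phi>" and ?x = "\<lambda>i. coset_of \<phi> (unit_vec i)"
  have gens: "\<forall>i<N. ?x i \<in> mcarrier ?F" by (simp add: free_realization_carrier unit_vec_fin_vecs)
  have spans: "\<forall>y\<in>mcarrier ?F. \<exists>a. y = msum ?F (\<lambda>i. mact ?F (?x i) (a i)) N"
  proof
    fix y assume "y \<in> mcarrier ?F"
    then obtain u where u: "u \<in> fin_vecs N" "y = coset_of \<phi> u" by (auto simp: free_realization_carrier)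
    have "(\<lambda>l. if l < N then u l else 0) = u" using u by (auto simp: fin_vecs_def fun_eq_iff)
    then show "\<exists>a. y = msum ?F (\<lambda>i. mact ?F (?x i) (a i)) N" using u msum_generators[of u] by auto
  qed
  have rels: "\<forall>j<m. msum ?F (\<lambda>i. mact ?F (?x i) (E j i)) N = mzero ?F"
    by (simp add: msum_generators free_realization_zero coset_of_rel_span row_rel_span)
  have syz: "\<forall>a. msum ?F (\<lambda>i. mact ?F (?x i) (a i)) N = mzero ?F \<longrightarrow> (\<exists>s. \<forall>i<N. a i = (\<Sum>j<m. E j i * s j))"
  proof (intro allI impI)
    fix a assume "msum ?F (\<lambda>i. mact ?F (?x i) (a i)) N = mzero ?F"
    then have e: "coset_of \<phi> (\<lambda>l. if l < N then a l else 0) = coset_of \<phi> 0"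
      by (simp add: msum_generators free_realization_zero coset_of_zero)
    have "(\<lambda>l. if l < N then a l else 0) \<in> fin_vecs N" by (auto simp: fin_vecs_def)
    then have "(\<lambda>l. if l < N then a l else 0) \<in> rel_span \<phi>"
      using e coset_of_eq_iff[of _ 0] fin_vecs_zero by auto
    then obtain s where "(\<lambda>l. if l < N then a l else 0) = (\<lambda>j. if j < N then (\<Sum>i<m. E i j * s i) else 0)"
      by (auto simp: rel_span_eq)
    then have "\<forall>i<N. a i = (\<Sum>j<m. E j i * s j)" by (auto simp: fun_eq_iff) metis
    then show "\<exists>s. \<forall>i<N. a i = (\<Sum>j<m. E j i * s j)" by blast
  qed
  show ?thesis unfolding fin_pres_def
    by (intro conjI free_realization_module exI[of _ N] exI[of _ ?x] exI[of _ m] exI[of _ E] gens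
        spans rels syz)
qed

lemma generic_point_pp_set: "0 < N \<Longrightarrow> coset_of \<phi> (unit_vec 0) \<in> pp_set (free_realization \<phi>) \<phi>"
  unfolding pp_set_def
proof (intro CollectI conjI exI[of _ "\<lambda>j. coset_of \<phi> (unit_vec j)"])
  assume "0 < N" then show "coset_of \<phi> (unit_vec 0) \<in> mcarrier (free_realization \<phi>)"
    by (simp add: free_realization_carrier unit_vec_fin_vecs)
  show "solves (free_realization \<phi>) \<phi> (\<lambda>j. coset_of \<phi> (unit_vec j))"
    unfolding ppf_eq solves_iff
  proof (intro conjI allI impI)
    fix j assume "j < N" then show
        "coset_of (N, m, E) (unit_vec j) \<in> mcarrier (free_realization (N, m, E))"
      using free_realization_carrier unit_vec_fin_vecs ppf_eq by (metis imageI)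
  next
    fix i assume i: "i < m"
    show "msum (free_realization (N, m, E))
        (\<lambda>j. mact (free_realization (N, m, E)) (coset_of (N, m, E) (unit_vec j)) (E i j)) N
            = mzero (free_realization (N, m, E))"
      using msum_generators[of "E i"] coset_of_rel_span[OF row_rel_span[OF i]] free_realization_zero
          ppf_eq by simp
  qed
qed simp

lemma lin_comb_rel_span:
  assumes M: "right_module M" and w: "solves M \<phi> w" and d: "u - u' \<in> rel_span \<phi>"
  shows "lin_comb M N w u = lin_comb M N w u'"
proof -
  interpret rmodule M by (rule rmodule.intro[OF M])
  have wc: "\<And>j. j < N \<Longrightarrow> w j \<in> mcarrier M" and we: "\<And>i. i < m \<Longrightarrow> msum M (\<lambda>j. mact M (w j) (E i j)) N
      = mzero M"
    using w ppf_eq by (auto simp: solves_iff)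
  obtain s where s: "u - u' = (\<lambda>j. if j < N then (\<Sum>i<m. E i j * s i) else 0)" using d
    by (auto simp: rel_span_eq)
  have uj: "\<And>j. j < N \<Longrightarrow> u j = u' j + (\<Sum>i<m. E i j * s i)"
    using s by (auto simp: fun_eq_iff) (metis add.commute diff_add_cancel)
  have "lin_comb M N w u
      = msum M (\<lambda>j. madd M (mact M (w j) (u' j)) (mact M (w j) (\<Sum>i<m. E i j * s i))) N"
    unfolding lin_comb_def using wc uj by (intro msum_cong) (simp add: act_radd)
  also have "\<dots> = madd M (lin_comb M N w u') (msum M (\<lambda>j. mact M (w j) (\<Sum>i<m. E i j * s i)) N)"
    unfolding lin_comb_def using wc by (intro msum_add) auto
  also have "msum M (\<lambda>j. mact M (w j) (\<Sum>i<m. E i j * s i)) N =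
             msum M (\<lambda>j. msum M (\<lambda>i. mact M (mact M (w j) (E i j)) (s i)) m) N"
    using wc by (intro msum_cong) (simp add: act_rsum act_mult)
  also have "\<dots> = msum M (\<lambda>i. msum M (\<lambda>j. mact M (mact M (w j) (E i j)) (s i)) N) m"
    using wc by (intro msum_swap) auto
  also have "\<dots> = msum M (\<lambda>i. mact M (msum M (\<lambda>j. mact M (w j) (E i j)) N) (s i)) m"
    using wc by (intro msum_cong) (simp add: msum_act)
  also have "\<dots> = mzero M"
    using we by (intro msum_zero) simp
  finally show ?thesis unfolding lin_comb_def using wc by simp
qed

lemma free_realization_universal:
  assumes M: "right_module M" and w: "solves M \<phi> w" and N: "0 < N"
  shows "\<exists>v\<in>rhom (free_realization \<phi>) M. v (coset_of \<phi> (unit_vec 0)) = w 0"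
proof -
  interpret rmodule M by (rule rmodule.intro[OF M])
  have wc: "\<And>j. j < N \<Longrightarrow> w j \<in> mcarrier M"
    using w ppf_eq by (auto simp: solves_iff)
  define v where "v = restrict (\<lambda>U. lin_comb M N w (SOME u. u \<in> U)) (mcarrier (free_realization \<phi>))"
  have vc: "v (coset_of \<phi> u) = lin_comb M N w u" if u: "u \<in> fin_vecs N" for u
  proof -
    have "(SOME u'. u' \<in> coset_of \<phi> u) \<in> coset_of \<phi> u" using coset_of_self[OF u]
      by (rule someI[where P="\<lambda>u'. u' \<in> coset_of \<phi> u"])
    then have "(SOME u'. u' \<in> coset_of \<phi> u) - u \<in> rel_span \<phi>" by (simp add: coset_of_eq)
    then show ?thesis using lin_comb_rel_span[OF M w] u by (simp add: v_def free_realization_carrier)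
  qed
  have "v \<in> rhom (free_realization \<phi>) M"
    unfolding rhom_def
  proof (intro CollectI conjI ballI allI)
    show "v \<in> mcarrier (free_realization \<phi>) \<rightarrow>\<^sub>E mcarrier M"
      using lin_comb_closed[OF wc] by (auto simp: v_def)
  next
    fix x y assume "x \<in> mcarrier (free_realization \<phi>)" "y \<in> mcarrier (free_realization \<phi>)"
    then obtain u u' where u: "u \<in> fin_vecs N" "x = coset_of \<phi> u" "u' \<in> fin_vecs N" "y = coset_of \<phi> u'"
      by (auto simp: free_realization_carrier)
    then show "v (madd (free_realization \<phi>) x y) = madd M (v x) (v y)"
      by (simp add: free_realization_add vc fin_vecs_add lin_comb_add_coeffs[OF wc])
  next
    fix x r assume "x \<in> mcarrier (free_realization \<phi>)"
    then obtain u where u: "u \<in> fin_vecs N" "x = coset_of \<phi> u" by (auto simp: free_realization_carrier)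
    then show "v (mact (free_realization \<phi>) x r) = mact M (v x) r"
      by (simp add: free_realization_act vc fin_vecs_mult lin_comb_mult_coeffs[OF wc])
  qed
  moreover have "v (coset_of \<phi> (unit_vec 0)) = w 0"
    using vc[OF unit_vec_fin_vecs[OF N]] lin_comb_unit_vec[OF N wc] by simp
  ultimately show ?thesis by blast
qed

end

definition generic_point :: "'r::ring_1 ppf \<Rightarrow> (nat \<Rightarrow> 'r) set" where
  "generic_point \<phi> = coset_of \<phi> (unit_vec 0)"

lemma free_realization_module: "right_module (free_realization \<phi>)"
  by (metis ppf_presentation.free_realization_module ppf_presentation.intro prod_cases3)

lemma fin_pres_free_realization: "fin_pres (free_realization \<phi>)"
  by (metis ppf_presentation.fin_pres_free_realization ppf_presentation.intro prod_cases3)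

lemma generic_point_pp_set: "0 < fst \<phi> \<Longrightarrow> generic_point \<phi> \<in> pp_set (free_realization \<phi>) \<phi>"
  unfolding generic_point_def
  by (metis ppf_presentation.generic_point_pp_set ppf_presentation.intro prod_cases3 fst_conv)

lemma free_realization_universal:
  "right_module M \<Longrightarrow> solves M \<phi> w \<Longrightarrow> 0 < fst \<phi> \<Longrightarrow>
   \<exists>v\<in>rhom (free_realization \<phi>) M. v (generic_point \<phi>) = w 0"
  unfolding generic_point_def
  by (metis ppf_presentation.free_realization_universal ppf_presentation.intro prod_cases3 fst_conv)

lemma generic_point_carrier: "0 < fst \<phi> \<Longrightarrow> generic_point \<phi> \<in> mcarrier (free_realization \<phi>)"
  using generic_point_pp_set unfolding pp_set_def by blast

section \<open>Direct sums and the descending chain condition\<close>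

lemma dsum_carrier: "mcarrier (dsum I T) = {u. u \<in> I \<rightarrow>\<^sub>E mcarrier T \<and> finite {i\<in>I. u i \<noteq> mzero T}}"
  by (simp add: dsum_def)
lemma dsum_add: "madd (dsum I T) u v = restrict (\<lambda>i. madd T (u i) (v i)) I"
  by (simp add: dsum_def)
lemma dsum_zero: "mzero (dsum I T) = restrict (\<lambda>i. mzero T) I"
  by (simp add: dsum_def)
lemma dsum_act: "mact (dsum I T) u r = restrict (\<lambda>i. mact T (u i) r) I"
  by (simp add: dsum_def)

lemma finite_support_map:
  assumes "finite {i\<in>I. u i \<noteq> z}" "finite {i\<in>I. v i \<noteq> z}" "\<And>i. u i = z \<Longrightarrow> v i = z \<Longrightarrow> F i = z"
  shows "finite {i\<in>I. F i \<noteq> z}"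
  by (rule finite_subset[of _ "{i\<in>I. u i \<noteq> z} \<union> {i\<in>I. v i \<noteq> z}"]) (use assms in auto)

lemma dsum_restrict_closed:
  assumes "\<And>i. i \<in> I \<Longrightarrow> f i \<in> mcarrier T" "finite {i\<in>I. f i \<noteq> mzero T}"
  shows "restrict f I \<in> mcarrier (dsum I T)"
proof -
  have "{i\<in>I. restrict f I i \<noteq> mzero T} = {i\<in>I. f i \<noteq> mzero T}" by auto
  then show ?thesis using assms unfolding dsum_carrier by simp
qed

context rmodule begin

lemma dsum_closed:
  assumes u: "u \<in> mcarrier (dsum I M)" and v: "v \<in> mcarrier (dsum I M)"
  shows "madd (dsum I M) u v \<in> mcarrier (dsum I M)"
    and "mact (dsum I M) u r \<in> mcarrier (dsum I M)"
    and "restrict (\<lambda>i. mneg M (u i)) I \<in> mcarrier (dsum I M)"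
proof -
  have uc: "\<And>i. i \<in> I \<Longrightarrow> u i \<in> mcarrier M" and uf: "finite {i\<in>I. u i \<noteq> mzero M}"
    and vc: "\<And>i. i \<in> I \<Longrightarrow> v i \<in> mcarrier M" and vf: "finite {i\<in>I. v i \<noteq> mzero M}"
    using u v by (auto simp: dsum_carrier)
  show "madd (dsum I M) u v \<in> mcarrier (dsum I M)" unfolding dsum_add
    by (rule dsum_restrict_closed) (use uc vc finite_support_map[OF uf vf] in auto)
  show "mact (dsum I M) u r \<in> mcarrier (dsum I M)" unfolding dsum_act
    by (rule dsum_restrict_closed) (use uc finite_support_map[OF uf uf] in auto)
  show "restrict (\<lambda>i. mneg M (u i)) I \<in> mcarrier (dsum I M)"
    by (rule dsum_restrict_closed) (use uc finite_support_map[OF uf uf] in auto)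
qed

lemma dsum_module: "right_module (dsum I M)"
  unfolding right_module_def
proof (intro conjI ballI allI)
  fix u v assume "u \<in> mcarrier (dsum I M)" "v \<in> mcarrier (dsum I M)"
  then show "madd (dsum I M) u v = madd (dsum I M) v u"
    by (auto simp: dsum_carrier dsum_add PiE_iff add_comm)
next
  fix u v assume "u \<in> mcarrier (dsum I M)" "v \<in> mcarrier (dsum I M)"
  then show "madd (dsum I M) u v \<in> mcarrier (dsum I M)" by (rule dsum_closed(1))
next
  fix u r assume u: "u \<in> mcarrier (dsum I M)"
  show "mact (dsum I M) u r \<in> mcarrier (dsum I M)" by (rule dsum_closed(2)[OF u u])
next
  fix u assume u: "u \<in> mcarrier (dsum I M)"
  then show "\<exists>v\<in>mcarrier (dsum I M). madd (dsum I M) u v = mzero (dsum I M)"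
    using dsum_closed(3)[OF u u] by (intro bexI[of _ "restrict (\<lambda>i. mneg M (u i)) I"])
      (auto simp: dsum_carrier dsum_add dsum_zero PiE_iff)
qed (auto simp: dsum_closed dsum_carrier dsum_add dsum_zero dsum_act PiE_iff fun_eq_iff extensional_def
    add_assoc act_add act_radd act_mult)

lemma dsum_msum: "(\<And>j. j < n \<Longrightarrow> f j \<in> mcarrier (dsum I M)) \<Longrightarrow>
   msum (dsum I M) f n = restrict (\<lambda>i. msum M (\<lambda>j. f j i) n) I"
  by (induction n) (auto simp: dsum_add dsum_zero)

lemma solves_dsum_iff:
  assumes "\<And>j. j < fst \<phi> \<Longrightarrow> w j \<in> mcarrier (dsum I M)"
  shows "solves (dsum I M) \<phi> w \<longleftrightarrow> (\<forall>i\<in>I. solves M \<phi> (\<lambda>j. w j i))"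
proof -
  obtain N m E where p: "\<phi> = (N, m, E)" by (cases \<phi>) auto
  interpret sum: rmodule "dsum I M" by (rule rmodule.intro, rule dsum_module)
  have "msum (dsum I M) (\<lambda>j. mact (dsum I M) (w j) (E r j)) N =
      restrict (\<lambda>i. msum M (\<lambda>j. mact M (w j i) (E r j)) N) I" for r
  proof -
    have "msum (dsum I M) (\<lambda>j. mact (dsum I M) (w j) (E r j)) N =
        restrict (\<lambda>i. msum M (\<lambda>j. mact (dsum I M) (w j) (E r j) i) N) I"
      using assms p by (intro dsum_msum sum.act_closed) auto
    then show ?thesis by (simp add: dsum_act cong: restrict_cong)
  qed
  moreover have "\<forall>i\<in>I. \<forall>j<N. w j i \<in> mcarrier M" using assms p by (auto simp: dsum_carrier)
  ultimately show ?thesis using assms p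
    by (auto simp: solves_iff dsum_zero fun_eq_iff restrict_def split: if_splits)
qed

lemma pp_set_dsum: "pp_set (dsum I M) \<phi> = {u \<in> mcarrier (dsum I M). \<forall>i\<in>I. u i \<in> pp_set M \<phi>}"
proof (intro set_eqI iffI CollectI conjI ballI)
  fix u i assume u: "u \<in> pp_set (dsum I M) \<phi>" and i: "i \<in> I"
  then obtain w where w: "solves (dsum I M) \<phi> w" "w 0 = u" by (auto simp: pp_set_def)
  have "solves M \<phi> (\<lambda>j. w j i)" using solves_dsum_iff[of \<phi> w] solves_carrier[OF w(1)] w(1) i by blast
  moreover have "u i \<in> mcarrier M" using u i by (auto simp: pp_set_def dsum_carrier)
  ultimately show "u i \<in> pp_set M \<phi>" using w(2) unfolding pp_set_def by blast
next
  fix u assume "u \<in> {u \<in> mcarrier (dsum I M). \<forall>i\<in>I. u i \<in> pp_set M \<phi>}"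
  then have u: "u \<in> mcarrier (dsum I M)" "\<And>i. i \<in> I \<Longrightarrow> u i \<in> pp_set M \<phi>" by auto
  define W where "W i = (SOME w. solves M \<phi> w \<and> w 0 = u i)" for i
  have W: "solves M \<phi> (W i) \<and> W i 0 = u i" if "i \<in> I" for i
    using u that someI_ex[of "\<lambda>w. solves M \<phi> w \<and> w 0 = u i"] unfolding W_def pp_set_def by blast
  define w where "w j = restrict (\<lambda>i. if u i = mzero M then mzero M else W i j) I" for j
    \<comment> \<open>the zero solution where u vanishes keeps the support of w finite\<close>
  have fin: "finite {i \<in> I. u i \<noteq> mzero M}" using u by (simp add: dsum_carrier)
  have wc: "w j \<in> mcarrier (dsum I M)" if j: "j < fst \<phi>" for j
    unfolding w_def
  proof (rule dsum_restrict_closed)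
    show "(if u i = mzero M then mzero M else W i j) \<in> mcarrier M" if "i \<in> I" for i
      using W[OF that] solves_carrier[OF _ j] by auto
    show "finite {i \<in> I. (if u i = mzero M then mzero M else W i j) \<noteq> mzero M}"
      by (rule finite_subset[OF _ fin]) auto
  qed
  have comps: "solves M \<phi> (\<lambda>j. w j i)" if i: "i \<in> I" for i
  proof (cases "u i = mzero M")
    case True then show ?thesis using i solves_zero by (simp add: w_def)
  next
    case False then show ?thesis using i W[OF i] by (simp add: w_def)
  qed
  then have "solves (dsum I M) \<phi> w" using solves_dsum_iff[of \<phi> w] wc by blast
  moreover have "w 0 = u"
    using W u by (auto simp: w_def fun_eq_iff dsum_carrier PiE_iff extensional_def)
  ultimately show "u \<in> pp_set (dsum I M) \<phi>" using u unfolding pp_set_def by auto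
qed (auto simp: pp_set_def)

end

definition pp_dcc :: "('r::ring_1, 'x) rmod \<Rightarrow> bool" where
  "pp_dcc X \<longleftrightarrow> \<not> (\<exists>\<phi>. (\<forall>n. 0 < fst (\<phi> n)) \<and> (\<forall>n. pp_set X (\<phi> (Suc n)) \<subset> pp_set X (\<phi> n)))"

primrec ppf_conj_chain :: "(nat \<Rightarrow> 'r::ring_1 ppf) \<Rightarrow> nat \<Rightarrow> 'r ppf" where
  "ppf_conj_chain \<phi> 0 = \<phi> 0"
| "ppf_conj_chain \<phi> (Suc n) = ppf_conj (ppf_conj_chain \<phi> n) (\<phi> (Suc n))"

lemma fst_ppf_conj_chain: "(\<And>n. 0 < fst (\<phi> n)) \<Longrightarrow> 0 < fst (ppf_conj_chain \<phi> n)"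
  by (induction n) (auto simp: fst_ppf_conj)

lemma (in rmodule) pp_set_ppf_conj_chain:
  assumes "\<And>n. 0 < fst (\<phi> n)" "\<And>n. pp_set M (\<phi> (Suc n)) \<subseteq> pp_set M (\<phi> n)"
  shows "pp_set M (ppf_conj_chain \<phi> n) = pp_set M (\<phi> n)"
proof (induction n)
  case (Suc n)
  then show ?case using assms pp_set_conj[OF fst_ppf_conj_chain] by auto
qed simp

lemma dsum_pp_dcc:
  fixes T :: "('r::ring_1, 'm) rmod"
  assumes T: "right_module T"
    and stab: "\<And>\<psi>. (\<And>n. 0 < fst (\<psi> n)) \<Longrightarrow> (\<And>n. \<exists>\<chi>. 0 < fst \<chi> \<and> \<psi> (Suc n) = ppf_conj (\<psi> n) \<chi>) \<Longrightarrow>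
        \<exists>m. \<forall>k\<ge>m. pp_set T (\<psi> k) = pp_set T (\<psi> m)"
  shows "pp_dcc (dsum I T)"
  unfolding pp_dcc_def
proof (intro notI, elim exE conjE)
  fix \<phi> assume pos: "\<forall>n. 0 < fst (\<phi> n)" and desc:
      "\<forall>n. pp_set (dsum I T) (\<phi> (Suc n)) \<subset> pp_set (dsum I T) (\<phi> n)"
  interpret T: rmodule T by (rule rmodule.intro[OF T])
  interpret sum: rmodule "dsum I T" by (rule rmodule.intro, rule T.dsum_module)
  define \<psi> where "\<psi> = ppf_conj_chain \<phi>"
  have "\<exists>m. \<forall>k\<ge>m. pp_set T (\<psi> k) = pp_set T (\<psi> m)"
  proof (rule stab)
    show "0 < fst (\<psi> n)" for n unfolding \<psi>_def using pos by (simp add: fst_ppf_conj_chain)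
    show "\<exists>\<chi>. 0 < fst \<chi> \<and> \<psi> (Suc n) = ppf_conj (\<psi> n) \<chi>" for n
      unfolding \<psi>_def using pos by (intro exI[of _ "\<phi> (Suc n)"]) simp
  qed
  then obtain m where "pp_set T (\<psi> (Suc m)) = pp_set T (\<psi> m)" by (meson le_Suc_eq order_refl)
  then have "pp_set (dsum I T) (\<psi> (Suc m)) = pp_set (dsum I T) (\<psi> m)" by (simp only: T.pp_set_dsum)
  moreover have "pp_set (dsum I T) (\<psi> n) = pp_set (dsum I T) (\<phi> n)" for n
    unfolding \<psi>_def using pos desc by (intro sum.pp_set_ppf_conj_chain) auto
  ultimately show False using desc by auto
qed

section \<open>The descending chain condition implies pure-injectivity\<close>

definition ppf_vanish :: "'r::ring_1 ppf \<Rightarrow> nat set \<Rightarrow> 'r ppf" where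
  "ppf_vanish \<phi> J = (case \<phi> of (N, m, E) \<Rightarrow>
     (N, m + N, \<lambda>i j. if i < m then E i j else if j = i - m \<and> j \<in> J then 1 else 0))"

definition link_matrix :: "nat \<Rightarrow> nat set \<Rightarrow> (nat \<Rightarrow> nat \<Rightarrow> 'r) \<Rightarrow> nat \<Rightarrow> nat \<Rightarrow> 'r::ring_1" where
  "link_matrix m J E i j =
     (if i < m then (if j = 0 then 0 else E i (j - 1))
      else if i - m \<in> J then (if j = Suc (i - m) then 1 else if j = 0 then -1 else 0) else 0)"

text \<open>A fresh variable 0 is added in front, and the variables indexed by J are identified with it.\<close>
definition ppf_link :: "'r::ring_1 ppf \<Rightarrow> nat set \<Rightarrow> 'r ppf" where
  "ppf_link \<phi> J = (case \<phi> of (N, m, E) \<Rightarrow> (Suc N, m + N, link_matrix m J E))"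

lemma fst_ppf_vanish: "fst (ppf_vanish \<phi> J) = fst \<phi>"
  by (cases \<phi>) (simp add: ppf_vanish_def)

lemma fst_ppf_link: "fst (ppf_link \<phi> J) = Suc (fst \<phi>)"
  by (cases \<phi>) (simp add: ppf_link_def)

context rmodule begin

lemma msum_unit_row:
  assumes "k < N" "\<And>j. j < N \<Longrightarrow> w j \<in> mcarrier M"
  shows "msum M (\<lambda>j. mact M (w j) (if j = k \<and> j \<in> J then 1 else 0)) N = (if k \<in> J then w k else mzero M)"
  using assms by (cases "k \<in> J") (auto intro!: msum_zero simp: msum_single[of k])

lemma solves_vanish:
  assumes "J \<subseteq> {..<fst \<phi>}"
  shows "solves M (ppf_vanish \<phi> J) w \<longleftrightarrow> solves M \<phi> w \<and> (\<forall>j\<in>J. w j = mzero M)"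
proof -
  obtain N m E where p: "\<phi> = (N, m, E)" by (cases \<phi>) auto
  show ?thesis
  proof (cases "\<forall>j<N. w j \<in> mcarrier M")
    case False then show ?thesis using p by (auto simp: ppf_vanish_def solves_iff)
  next
    case True
    then have "(\<forall>k<N. (if k \<in> J then w k else mzero M) = mzero M) \<longleftrightarrow> (\<forall>j\<in>J. w j = mzero M)"
      using assms p by auto
    then show ?thesis using True p
      by (simp add: ppf_vanish_def solves_iff all_less_add_iff msum_unit_row)
  qed
qed

lemma msum_link_matrix_left:
  assumes "i < m" "\<And>j. j < Suc N \<Longrightarrow> w j \<in> mcarrier M"
  shows "msum M (\<lambda>j. mact M (w j) (link_matrix m J E i j)) (Suc N)
      = msum M (\<lambda>j. mact M (w (Suc j)) (E i j)) N"
proof -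
  have "msum M (\<lambda>j. mact M (w j) (link_matrix m J E i j)) (Suc N) =
      madd M (mact M (w 0) 0) (msum M (\<lambda>j. mact M (w (Suc j)) (link_matrix m J E i (Suc j))) N)"
    using assms by (subst msum_shift) (auto simp: link_matrix_def)
  then show ?thesis using assms by (simp add: link_matrix_def)
qed

lemma msum_link_matrix_right:
  assumes "k < N" "\<And>j. j < Suc N \<Longrightarrow> w j \<in> mcarrier M"
  shows "msum M (\<lambda>j. mact M (w j) (link_matrix m J E (m + k) j)) (Suc N) =
    (if k \<in> J then madd M (mneg M (w 0)) (w (Suc k)) else mzero M)"
proof (cases "k \<in> J")
  case True
  have "msum M (\<lambda>j. mact M (w j) (link_matrix m J E (m + k) j)) (Suc N) =
      madd M (mact M (w 0) (-1)) (msum M (\<lambda>j. mact M (w (Suc j)) (link_matrix m J E (m + k) (Suc j))) N)"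
    using assms True by (subst msum_shift) (auto simp: link_matrix_def)
  also have "msum M (\<lambda>j. mact M (w (Suc j)) (link_matrix m J E (m + k) (Suc j))) N = w (Suc k)"
    using assms True by (subst msum_single[of k]) (auto simp: link_matrix_def)
  finally show ?thesis using assms True by (simp add: act_uminus)
next
  case False
  then show ?thesis using assms by (auto intro!: msum_zero simp: link_matrix_def)
qed

lemma solves_link:
  "solves M (ppf_link \<phi> J) w \<longleftrightarrow>
     w 0 \<in> mcarrier M \<and> solves M \<phi> (\<lambda>j. w (Suc j)) \<and> (\<forall>k\<in>J. k < fst \<phi> \<longrightarrow> w (Suc k) = w 0)"
proof -
  obtain N m E where p: "\<phi> = (N, m, E)" by (cases \<phi>) auto
  show ?thesis
  proof (cases "\<forall>j<Suc N. w j \<in> mcarrier M")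
    case False then show ?thesis using p by (auto simp: ppf_link_def solves_iff All_less_Suc2)
  next
    case True
    then have car: "\<And>j. j < Suc N \<Longrightarrow> w j \<in> mcarrier M" by blast
    have link: "(if k \<in> J then madd M (mneg M (w 0)) (w (Suc k)) else mzero M) = mzero M \<longleftrightarrow>
        (k \<in> J \<longrightarrow> w (Suc k) = w 0)" if "k < N" for k
      using car[of 0] car[of "Suc k"] that add_eq_zero_iff[of "w (Suc k)" "w 0"]
      by (auto simp: add_comm[of "mneg M (w 0)"])
    have "(\<forall>i<m + N. msum M (\<lambda>j. mact M (w j) (link_matrix m J E i j)) (Suc N) = mzero M) \<longleftrightarrow>
        (\<forall>i<m. msum M (\<lambda>j. mact M (w (Suc j)) (E i j)) N = mzero M) \<and> (\<forall>k\<in>J. k < N \<longrightarrow> w (Suc k) = w 0)"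
      unfolding all_less_add_iff
        using msum_link_matrix_left[OF _ car] msum_link_matrix_right[OF _ car] link
      by (auto simp del: msum.simps)
    then show ?thesis using True p by (simp add: ppf_link_def solves_iff All_less_Suc2)
  qed
qed

end

definition param_pp_set :: "('r::ring_1, 'x) rmod \<Rightarrow> 'r ppf \<Rightarrow> nat set \<Rightarrow> (nat \<Rightarrow> 'x) \<Rightarrow> 'x set" where
  "param_pp_set X \<phi> J u = {t \<in> mcarrier X. \<exists>w. solves X \<phi> w \<and> w 0 = t \<and> (\<forall>j\<in>J. w j = u j)}"

context rmodule begin

lemma pp_set_vanish: "J \<subseteq> {..<fst \<phi>} \<Longrightarrow> pp_set M (ppf_vanish \<phi> J) = param_pp_set M \<phi> J (\<lambda>_. mzero M)"
  unfolding pp_set_def param_pp_set_def using solves_vanish by auto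
lemma param_pp_set_diff:
  assumes "J \<subseteq> {..<fst \<phi>}" "s1 \<in> param_pp_set M \<phi> J u" "s2 \<in> param_pp_set M \<phi> J u"
  shows "madd M s1 (mneg M s2) \<in> param_pp_set M \<phi> J (\<lambda>_. mzero M)"
proof -
  obtain w1 w2 where w: "solves M \<phi> w1" "w1 0 = s1" "\<forall>j\<in>J. w1 j = u j" "s1 \<in> mcarrier M"
    "solves M \<phi> w2" "w2 0 = s2" "\<forall>j\<in>J. w2 j = u j" "s2 \<in> mcarrier M"
    using assms unfolding param_pp_set_def by auto
  have "solves M \<phi> (\<lambda>j. madd M (w1 j) (mneg M (w2 j)))" by (rule solves_add[OF w(1) solves_neg[OF w(5)]])
  moreover have "\<forall>j\<in>J. madd M (w1 j) (mneg M (w2 j)) = mzero M"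
  proof
    fix j assume j: "j \<in> J"
    then have "w2 j \<in> mcarrier M" using solves_carrier[OF w(5)] assms(1) by auto
    then show "madd M (w1 j) (mneg M (w2 j)) = mzero M" using w j by simp
  qed
  ultimately show ?thesis unfolding param_pp_set_def using w by auto
qed

lemma param_pp_set_add:
  assumes "s \<in> param_pp_set M \<phi> J u" "h \<in> param_pp_set M \<phi> J (\<lambda>_. mzero M)" "J \<subseteq> {..<fst \<phi>}"
  shows "madd M s h \<in> param_pp_set M \<phi> J u"
proof -
  obtain w1 w2 where w: "solves M \<phi> w1" "w1 0 = s" "\<forall>j\<in>J. w1 j = u j" "s \<in> mcarrier M"
    "solves M \<phi> w2" "w2 0 = h" "\<forall>j\<in>J. w2 j = mzero M" "h \<in> mcarrier M"
    using assms unfolding param_pp_set_def by auto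
  have "solves M \<phi> (\<lambda>j. madd M (w1 j) (w2 j))" by (rule solves_add[OF w(1) w(5)])
  moreover have "\<forall>j\<in>J. madd M (w1 j) (w2 j) = u j"
  proof
    fix j assume j: "j \<in> J"
    then have "w1 j \<in> mcarrier M" using solves_carrier[OF w(1)] assms(3) by auto
    then show "madd M (w1 j) (w2 j) = u j" using w j by simp
  qed
  ultimately show ?thesis unfolding param_pp_set_def using w by auto
qed

lemma param_pp_set_conj:
  assumes "\<phi>1 = (N1, m1, E1)" "\<phi>2 = (N2, m2, E2)" "0 < N1" "0 < N2"
    and JJ: "J1 \<subseteq> {..<N1}"
  shows "param_pp_set M (ppf_conj \<phi>1 \<phi>2) (J1 \<union> (\<lambda>j. N1 + j) ` J2)
      (\<lambda>j. if j < N1 then u1 j else u2 (j - N1))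
     \<subseteq> param_pp_set M \<phi>1 J1 u1 \<inter> param_pp_set M \<phi>2 J2 u2"
  (is "?S3 \<subseteq> _")
proof
  fix t assume "t \<in> ?S3"
  then obtain w' where w': "t \<in> mcarrier M" "solves M (ppf_conj \<phi>1 \<phi>2) w'" "w' 0 = t"
    "\<forall>j\<in>J1 \<union> (\<lambda>j. N1 + j) ` J2. w' j = (if j < N1 then u1 j else u2 (j - N1))"
    unfolding param_pp_set_def by auto
  have s: "solves M \<phi>1 w'" "solves M \<phi>2 (\<lambda>j. w' (N1 + j))" "w' 0 = w' N1"
    using solves_conj[OF assms(1-4)] w'(2) by auto
  have J1: "\<forall>j\<in>J1. w' j = u1 j" using w'(4) JJ by auto
  have J2: "\<forall>j\<in>J2. w' (N1 + j) = u2 j" using w'(4) by auto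
  have "t \<in> param_pp_set M \<phi>1 J1 u1" unfolding param_pp_set_def using w'(1,3) s(1) J1 by blast
  moreover have "t \<in> param_pp_set M \<phi>2 J2 u2" unfolding param_pp_set_def
    using w'(1,3) s(2,3) J2 by (intro CollectI conjI exI[of _ "\<lambda>j. w' (N1 + j)"]) auto
  ultimately show "t \<in> param_pp_set M \<phi>1 J1 u1 \<inter> param_pp_set M \<phi>2 J2 u2" by blast
qed

end

lemma (in rmodule) msum_mask_columns_eq_zero_iff:
  assumes "\<And>j. j < N \<Longrightarrow> w j \<in> mcarrier M"
  shows "msum M (\<lambda>j. mact M (w j) (e j)) N = mzero M \<longleftrightarrow>
    msum M (\<lambda>j. mact M (w j) (if j \<in> J then 0 else e j)) N =
    mneg M (msum M (\<lambda>j. mact M (if j \<in> J then w j else mzero M) (e j)) N)"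
    (is "?S = mzero M \<longleftrightarrow> ?P = mneg M ?Q")
proof -
  have "?S = msum M (\<lambda>j. madd M (mact M (w j) (if j \<in> J then 0 else e j))
      (mact M (if j \<in> J then w j else mzero M) (e j))) N"
    using assms by (intro msum_cong) auto
  also have "\<dots> = madd M ?P ?Q" using assms by (intro msum_add) auto
  finally have S: "?S = madd M ?P ?Q" .
  have c: "?P \<in> mcarrier M" "?Q \<in> mcarrier M" using assms by auto
  show ?thesis
  proof
    assume "?S = mzero M"
    then have "madd M ?Q ?P = mzero M" using S add_comm[OF c] by simp
    then show "?P = mneg M ?Q" by (rule neg_unique[OF c(2,1)])
  next
    assume "?P = mneg M ?Q"
    then show "?S = mzero M" using S c by simp
  qed
qed

text \<open>The entries in J are moved to the right-hand side as constants; purity solves the resulting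
  inhomogeneous system in A.\<close>
lemma pure_mono_lift_solution:
  fixes A :: "('r::ring_1, 'a) rmod" and B :: "('r, 'b) rmod"
  assumes A: "right_module A" and B: "right_module B" and pure: "pure_mono A B f"
    and w: "solves B \<phi> w" and J: "J \<subseteq> {..<fst \<phi>}"
    and a: "\<And>j. j \<in> J \<Longrightarrow> a j \<in> mcarrier A \<and> w j = f (a j)"
  shows "\<exists>v. solves A \<phi> v \<and> (\<forall>j\<in>J. v j = a j)"
proof -
  interpret A: rmodule A by (rule rmodule.intro[OF A])
  interpret B: rmodule B by (rule rmodule.intro[OF B])
  obtain N m E where p: "\<phi> = (N, m, E)" by (cases \<phi>) auto
  have f: "f \<in> rhom A B" using pure by (simp add: pure_mono_def)
  have wc: "\<And>j. j < N \<Longrightarrow> w j \<in> mcarrier B" and we: "\<And>i. i < m \<Longrightarrow> msum B (\<lambda>j. mact B (w j) (E i j)) N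
      = mzero B"
    using w p by (auto simp: solves_iff)
  define E' where "E' i j = (if j \<in> J then 0 else E i j)" for i j
  define s where "s i = msum A (\<lambda>j. mact A (if j \<in> J then a j else mzero A) (E i j)) N" for i
  have sc: "s i \<in> mcarrier A" for i unfolding s_def using a by simp
  have "f (s i) = msum B (\<lambda>j. mact B (if j \<in> J then w j else mzero B) (E i j)) N" for i
  proof -
    have "f (s i) = msum B (\<lambda>j. f (mact A (if j \<in> J then a j else mzero A) (E i j))) N"
      unfolding s_def using a by (intro rhom_msum[OF A B f]) auto
    also have "\<dots> = msum B (\<lambda>j. mact B (if j \<in> J then w j else mzero B) (E i j)) N"
      using a rhom_zero[OF A B f] by (intro msum_cong) (auto simp: rhom_act[OF f])
    finally show ?thesis .
  qed
  then have rhs: "msum B (\<lambda>j. mact B (w j) (E' i j)) N = f (mneg A (s i))" if "i < m" for i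
    using we[OF that] B.msum_mask_columns_eq_zero_iff[OF wc, where e = "E i" and J = J]
      rhom_neg[OF A B f sc] unfolding E'_def by simp
  have "\<exists>x. (\<forall>j<N. x j \<in> mcarrier A) \<and> (\<forall>i<m. msum A (\<lambda>j. mact A (x j) (E' i j)) N = mneg A (s i))"
    by (rule pure[unfolded pure_mono_def, THEN conjunct2, THEN conjunct2, rule_format,
          where m = m and n = N and r = E' and a = "\<lambda>i. mneg A (s i)"])
      (simp add: sc, rule exI[of _ w], simp add: wc rhs)
  then obtain x where x: "\<And>j. j < N \<Longrightarrow> x j \<in> mcarrier A"
    "\<And>i. i < m \<Longrightarrow> msum A (\<lambda>j. mact A (x j) (E' i j)) N = mneg A (s i)"
    by blast
  define v where "v j = (if j \<in> J then a j else x j)" for j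
  have vc: "\<And>j. j < N \<Longrightarrow> v j \<in> mcarrier A" using x a by (simp add: v_def)
  have "msum A (\<lambda>j. mact A (v j) (E i j)) N = mzero A" if i: "i < m" for i
  proof -
    have "msum A (\<lambda>j. mact A (v j) (E' i j)) N = msum A (\<lambda>j. mact A (x j) (E' i j)) N"
      using a x(1) by (intro msum_cong) (simp add: v_def E'_def)
    moreover have "msum A (\<lambda>j. mact A (if j \<in> J then v j else mzero A) (E i j)) N = s i"
      unfolding s_def by (intro msum_cong) (simp add: v_def)
    ultimately show ?thesis
      using A.msum_mask_columns_eq_zero_iff[OF vc, where e = "E i" and J = J] x(2)[OF i]
      unfolding E'_def by simp
  qed
  then have "solves A \<phi> v" using vc p by (simp add: solves_iff)
  then show ?thesis by (intro exI[of _ v]) (simp add: v_def)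
qed

definition transfers :: "('r::ring_1, 'b) rmod \<Rightarrow> ('r, 'x) rmod \<Rightarrow> ('b \<times> 'x) set \<Rightarrow> bool" where
  "transfers B X G \<longleftrightarrow> (\<forall>\<phi> w J u. solves B \<phi> w \<and> J \<subseteq> {..<fst \<phi>} \<and> (\<forall>j\<in>J. (w j, u j) \<in> G) \<longrightarrow>
      (\<exists>w'. solves X \<phi> w' \<and> (\<forall>j\<in>J. w' j = u j)))"

lemma transfersD:
  "transfers B X G \<Longrightarrow> solves B \<phi> w \<Longrightarrow> J \<subseteq> {..<fst \<phi>} \<Longrightarrow> (\<And>j. j \<in> J \<Longrightarrow> (w j, u j) \<in> G) \<Longrightarrow>
   \<exists>w'. solves X \<phi> w' \<and> (\<forall>j\<in>J. w' j = u j)"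
  unfolding transfers_def by blast

lemma transfers_Union:
  assumes C: "subset.chain \<G> C" "C \<noteq> {}" "\<And>G. G \<in> C \<Longrightarrow> transfers B X G"
  shows "transfers B X (\<Union>C)"
  unfolding transfers_def
proof (intro allI impI, elim conjE)
  fix \<phi> w J u assume w: "solves B \<phi> w" and J: "J \<subseteq> {..<fst \<phi>}" and G: "\<forall>j\<in>J. (w j, u j) \<in> \<Union>C"
  have "finite ((\<lambda>j. (w j, u j)) ` J)" using J finite_subset by blast
  moreover have "(\<lambda>j. (w j, u j)) ` J \<subseteq> \<Union>C" using G by blast
  ultimately obtain G0 where "G0 \<in> C" "(\<lambda>j. (w j, u j)) ` J \<subseteq> G0"
    using finite_subset_Union_chain[OF _ _ C(2,1)] by blast
  then show "\<exists>w'. solves X \<phi> w' \<and> (\<forall>j\<in>J. w' j = u j)" using transfersD[OF C(3) w J] by blast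
qed

lemma pure_mono_graph_transfers:
  assumes A: "right_module A" and B: "right_module B" and X: "right_module X"
    and pure: "pure_mono A B f" and g: "g \<in> rhom A X"
  shows "transfers B X ((\<lambda>a. (f a, g a)) ` mcarrier A)"
  unfolding transfers_def
proof (intro allI impI, elim conjE)
  fix \<phi> w J u assume w: "solves B \<phi> w" and J: "J \<subseteq> {..<fst \<phi>}"
    and G: "\<forall>j\<in>J. (w j, u j) \<in> (\<lambda>a. (f a, g a)) ` mcarrier A"
  then have "\<forall>j. \<exists>a. j \<in> J \<longrightarrow> a \<in> mcarrier A \<and> w j = f a \<and> u j = g a" by blast
  then obtain a where a: "\<And>j. j \<in> J \<Longrightarrow> a j \<in> mcarrier A \<and> w j = f (a j) \<and> u j = g (a j)"
    by (metis (mono_tags))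
  obtain v where v: "solves A \<phi> v" "\<forall>j\<in>J. v j = a j"
    using pure_mono_lift_solution[OF A B pure w J, of a] a by blast
  have "solves X \<phi> (\<lambda>j. g (v j))" by (rule solves_rhom[OF A X g v(1)])
  moreover have "\<forall>j\<in>J. g (v j) = u j" using v(2) a by simp
  ultimately show "\<exists>w'. solves X \<phi> w' \<and> (\<forall>j\<in>J. w' j = u j)" by blast
qed

lemma transfers_lin_comb:
  assumes G: "transfers B X G" and b: "\<And>j. j < n \<Longrightarrow> b j \<in> mcarrier B \<and> (b j, x j) \<in> G"
    and eq: "lin_comb B n b r = mzero B"
  shows "lin_comb X n x r = mzero X"
proof -
  have "solves B (n, 1, \<lambda>_. r) b" using b eq by (simp add: solves_iff lin_comb_def)
  moreover have "\<And>j. j \<in> {..<n} \<Longrightarrow> (b j, x j) \<in> G" using b by blast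
  ultimately obtain w' where w': "solves X (n, 1, \<lambda>_. r) w'" "\<forall>j\<in>{..<n}. w' j = x j"
    using transfersD[OF G] by (metis fst_conv order_refl)
  have "lin_comb X n x r = lin_comb X n w' r" using w'(2) by (intro lin_comb_cong) simp
  also have "\<dots> = mzero X" using w'(1) by (simp add: solves_iff lin_comb_def)
  finally show ?thesis .
qed

lemma transfers_two_terms:
  assumes B: "right_module B" and X: "right_module X"
    and G: "transfers B X G" and sub: "G \<subseteq> mcarrier B \<times> mcarrier X"
    and G12: "(b1, t1) \<in> G" "(b2, t2) \<in> G" and eq: "madd B (mact B b1 r1) (mact B b2 r2) = mzero B"
  shows "madd X (mact X t1 r1) (mact X t2 r2) = mzero X"
proof -
  interpret B: rmodule B by (rule rmodule.intro[OF B])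
  interpret X: rmodule X by (rule rmodule.intro[OF X])
  have c: "b1 \<in> mcarrier B" "b2 \<in> mcarrier B" "t1 \<in> mcarrier X" "t2 \<in> mcarrier X" using G12 sub by auto
  have "lin_comb X 2 (\<lambda>j. if j = 0 then t1 else t2) (\<lambda>j. if j = 0 then r1 else r2) = mzero X"
    by (rule transfers_lin_comb[OF G, where b = "\<lambda>j. if j = 0 then b1 else b2"])
      (use G12 eq c in \<open>auto simp: lin_comb_def numeral_2_eq_2 less_Suc_eq\<close>)
  then show ?thesis using c by (simp add: lin_comb_def numeral_2_eq_2)
qed

lemma transfers_single_valued:
  assumes B: "right_module B" and X: "right_module X" and G: "transfers B X G"
    and sub: "G \<subseteq> mcarrier B \<times> mcarrier X" and "(b, t1) \<in> G" "(b, t2) \<in> G"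
  shows "t1 = t2"
proof -
  interpret B: rmodule B by (rule rmodule.intro[OF B])
  interpret X: rmodule X by (rule rmodule.intro[OF X])
  have c: "b \<in> mcarrier B" "t1 \<in> mcarrier X" "t2 \<in> mcarrier X" using assms(5,6) sub by auto
  have "madd B (mact B b 1) (mact B b (-1)) = mzero B" using c by (simp add: B.act_uminus)
  then have "madd X (mact X t1 1) (mact X t2 (-1)) = mzero X"
    by (rule transfers_two_terms[OF B X G sub assms(5,6)])
  then have "madd X t1 (mneg X t2) = mzero X" using c by (simp add: X.act_uminus)
  then show ?thesis using X.add_eq_zero_iff c by blast
qed

lemma transfers_graph_rhom:
  fixes B :: "('r::ring_1, 'b) rmod" and X :: "('r, 'x) rmod"
  assumes B: "right_module B" and X: "right_module X" and G: "transfers B X G"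
    and sub: "G \<subseteq> mcarrier B \<times> mcarrier X" and total: "\<And>b. b \<in> mcarrier B \<Longrightarrow> \<exists>t. (b, t) \<in> G"
  obtains h where "h \<in> rhom B X" "\<And>b t. (b, t) \<in> G \<Longrightarrow> h b = t"
proof -
  interpret B: rmodule B by (rule rmodule.intro[OF B])
  interpret X: rmodule X by (rule rmodule.intro[OF X])
  note unique = transfers_single_valued[OF B X G sub]
  define h where "h = restrict (\<lambda>b. THE t. (b, t) \<in> G) (mcarrier B)"
  have hG: "(b, h b) \<in> G" if "b \<in> mcarrier B" for b
    using total[OF that] unique theI[of "\<lambda>t. (b, t) \<in> G"] that unfolding h_def by auto
  have h_eq: "h b = t" if "(b, t) \<in> G" for b t
    using hG unique that sub by blast
  have hc: "h b \<in> mcarrier X" if "b \<in> mcarrier B" for b using hG[OF that] sub by auto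
  have "h (madd B b1 b2) = madd X (h b1) (h b2)" if b: "b1 \<in> mcarrier B" "b2 \<in> mcarrier B" for b1 b2
  proof -
    have "lin_comb B 3 (\<lambda>j. [b1, b2, madd B b1 b2] ! j) (\<lambda>j. [1, 1, -1] ! j) = mzero B"
      using b by (simp add: lin_comb_def numeral_3_eq_3 B.act_uminus)
    then have "lin_comb X 3 (\<lambda>j. h ([b1, b2, madd B b1 b2] ! j)) (\<lambda>j. [1, 1, -1] ! j) = mzero X"
      using b hG by (intro transfers_lin_comb[OF G]) (auto simp: numeral_3_eq_3 less_Suc_eq)
    then show ?thesis using b hc
      by (simp add: lin_comb_def numeral_3_eq_3 X.act_uminus X.add_eq_zero_iff)
  qed
  moreover have "h (mact B b r) = mact X (h b) r" if b: "b \<in> mcarrier B" for b r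
  proof -
    have br: "mact B b r \<in> mcarrier B" using b by simp
    have "madd B (mact B b r) (mact B (mact B b r) (-1)) = mzero B" using br by (simp add: B.act_uminus)
    then have "madd X (mact X (h b) r) (mact X (h (mact B b r)) (-1)) = mzero X"
      by (rule transfers_two_terms[OF B X G sub hG[OF b] hG[OF br]])
    then have "mact X (h b) r = h (mact B b r)" using hc b br
      by (simp add: X.act_uminus X.add_eq_zero_iff)
    then show ?thesis by simp
  qed
  ultimately have "h \<in> rhom B X" using hc by (auto simp: rhom_def h_def)
  then show thesis using that h_eq by blast
qed

lemma pp_dcc_minimal:
  fixes X :: "('r::ring_1, 'x) rmod"
  assumes dcc: "pp_dcc X" and Q: "q \<in> Q" "\<And>q. q \<in> Q \<Longrightarrow> 0 < fst (F q)"
  shows "\<exists>q0\<in>Q. \<forall>q\<in>Q. \<not> pp_set X (F q) \<subset> pp_set X (F q0)"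
proof -
  define R where "R = {(S1, S2). S1 \<subset> S2 \<and> (\<exists>\<phi>. 0 < fst \<phi> \<and> S1 = pp_set X \<phi>)}"
  have "wf R"
  proof (rule ccontr)
    assume "\<not> wf R"
    then obtain S where S: "\<And>i. (S (Suc i), S i) \<in> R" unfolding wf_iff_no_infinite_down_chain by blast
    have "\<forall>i. \<exists>\<phi>. 0 < fst \<phi> \<and> S (Suc i) = pp_set X \<phi>" using S unfolding R_def by blast
    then obtain \<phi> where "\<forall>i. 0 < fst (\<phi> i) \<and> S (Suc i) = pp_set X (\<phi> i)"
      by (rule choice[THEN exE])
    then have \<phi>: "\<And>i. 0 < fst (\<phi> i)" "\<And>i. S (Suc i) = pp_set X (\<phi> i)" by blast+
    have "pp_set X (\<phi> (Suc n)) \<subset> pp_set X (\<phi> n)" for n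
      using S[of "Suc n"] \<phi>(2)[of n] \<phi>(2)[of "Suc n"] unfolding R_def by simp
    with \<phi>(1) have "\<exists>\<phi>. (\<forall>n. 0 < fst (\<phi> n)) \<and> (\<forall>n. pp_set X (\<phi> (Suc n)) \<subset> pp_set X (\<phi> n))"
      by blast
    then show False using dcc unfolding pp_dcc_def by blast
  qed
  then have "\<exists>z\<in>(\<lambda>q. pp_set X (F q)) ` Q. \<forall>y. (y, z) \<in> R \<longrightarrow> y \<notin> (\<lambda>q. pp_set X (F q)) ` Q"
    using Q(1) unfolding wf_eq_minimal by blast
  then obtain q0 where q0: "q0 \<in> Q" "\<forall>y. (y, pp_set X (F q0)) \<in> R \<longrightarrow> y \<notin> (\<lambda>q. pp_set X (F q)) ` Q"
    by blast
  have "\<not> pp_set X (F q) \<subset> pp_set X (F q0)" if "q \<in> Q" for q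
  proof
    assume "pp_set X (F q) \<subset> pp_set X (F q0)"
    then have "(pp_set X (F q), pp_set X (F q0)) \<in> R" using Q(2)[OF that] unfolding R_def by blast
    then show False using q0(2) that by blast
  qed
  then show ?thesis using q0(1) by blast
qed

text \<open>(\<phi>, w, J, u) is a pp condition satisfied by b, with parameters w j (j \<in> J) from the domain
  of G; replacing them by their G-partners u j yields its counterpart param_pp_set X \<phi> J u in X.\<close>
definition pp_conditions ::
  "('r::ring_1, 'b) rmod \<Rightarrow> ('b \<times> 'x) set \<Rightarrow> 'b \<Rightarrow> ('r ppf \<times> (nat \<Rightarrow> 'b) \<times> nat set \<times> (nat \<Rightarrow> 'x)) set" where
  "pp_conditions B G b = {(\<phi>, w, J, u). 0 < fst \<phi> \<and> solves B \<phi> w \<and> w 0 = b \<and>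
     J \<subseteq> {..<fst \<phi>} \<and> (\<forall>j\<in>J. (w j, u j) \<in> G)}"

lemma pp_conditions_iff:
  "(\<phi>, w, J, u) \<in> pp_conditions B G b \<longleftrightarrow>
     0 < fst \<phi> \<and> solves B \<phi> w \<and> w 0 = b \<and> J \<subseteq> {..<fst \<phi>} \<and> (\<forall>j\<in>J. (w j, u j) \<in> G)"
  by (simp add: pp_conditions_def)

lemma transfers_param_pp_set_nonempty:
  assumes "transfers B X G" "(\<phi>, w, J, u) \<in> pp_conditions B G b"
  shows "param_pp_set X \<phi> J u \<noteq> {}"
proof -
  have q: "0 < fst \<phi>" "solves B \<phi> w" "J \<subseteq> {..<fst \<phi>}" "\<And>j. j \<in> J \<Longrightarrow> (w j, u j) \<in> G"
    using assms(2) by (auto simp: pp_conditions_iff)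
  obtain w' where w': "solves X \<phi> w'" "\<forall>j\<in>J. w' j = u j"
    using transfersD[OF assms(1) q(2,3,4)] by blast
  then have "w' 0 \<in> param_pp_set X \<phi> J u"
    using solves_carrier[OF w'(1) q(1)] unfolding param_pp_set_def by auto
  then show ?thesis by blast
qed

lemma pp_conditions_conj:
  assumes B: "right_module B" and q1: "(\<phi>1, w1, J1, u1) \<in> pp_conditions B G b"
    and q2: "(\<phi>2, w2, J2, u2) \<in> pp_conditions B G b"
  shows "(ppf_conj \<phi>1 \<phi>2, \<lambda>j. if j < fst \<phi>1 then w1 j else w2 (j - fst \<phi>1),
      J1 \<union> (\<lambda>j. fst \<phi>1 + j) ` J2, \<lambda>j. if j < fst \<phi>1 then u1 j else u2 (j - fst \<phi>1)) \<in> pp_conditions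
          B G b"
proof -
  obtain N1 m1 E1 where p1: "\<phi>1 = (N1, m1, E1)" by (cases \<phi>1) auto
  obtain N2 m2 E2 where p2: "\<phi>2 = (N2, m2, E2)" by (cases \<phi>2) auto
  define w where "w = (\<lambda>j. if j < fst \<phi>1 then w1 j else w2 (j - fst \<phi>1))"
  have "solves B \<phi>1 w" using q1 p1 by (subst solves_cong[of _ w w1]) (auto simp: w_def pp_conditions_iff)
  moreover have "solves B \<phi>2 (\<lambda>j. w (N1 + j))" using q2 p1 by (simp add: w_def pp_conditions_iff)
  moreover have "w 0 = w N1" using q1 q2 p1 by (simp add: w_def pp_conditions_iff)
  ultimately have "solves B (ppf_conj \<phi>1 \<phi>2) w"
    using rmodule.solves_conj[OF rmodule.intro[OF B] p1 p2] q1 q2 p1 p2 by (simp add: pp_conditions_iff)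
  moreover have "w j = w1 j" if "j < N1" for j using that p1 by (simp add: w_def)
  moreover have "w (N1 + j) = w2 j" for j using p1 by (simp add: w_def)
  ultimately show ?thesis unfolding w_def[symmetric] using q1 q2 p1 p2
    by (auto simp: pp_conditions_iff fst_ppf_conj)
qed

text \<open>Conjoining a condition q to qs does not shrink the homogeneous counterpart, by minimality;
  so the realisations of the conjunction and of qs differ by elements of the same group, and every
  realisation of qs also realises q.\<close>
lemma minimal_pp_condition_realizes:
  fixes B :: "('r::ring_1, 'b) rmod" and X :: "('r, 'x) rmod"
  assumes B: "right_module B" and X: "right_module X" and G: "transfers B X G"
    and qs: "(\<phi>s, ws, Js, us) \<in> pp_conditions B G b"
    and minimal: "\<And>\<phi> w J u. (\<phi>, w, J, u) \<in> pp_conditions B G b \<Longrightarrow>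
      \<not> pp_set X (ppf_vanish \<phi> J) \<subset> pp_set X (ppf_vanish \<phi>s Js)"
    and ts: "ts \<in> param_pp_set X \<phi>s Js us" and q: "(\<phi>, w, J, u) \<in> pp_conditions B G b"
  shows "ts \<in> param_pp_set X \<phi> J u"
proof -
  interpret X: rmodule X by (rule rmodule.intro[OF X])
  obtain N1 m1 E1 where p1: "\<phi>s = (N1, m1, E1)" by (cases \<phi>s) auto
  obtain N2 m2 E2 where p2: "\<phi> = (N2, m2, E2)" by (cases \<phi>) auto
  have Js: "Js \<subseteq> {..<N1}" "0 < N1" and N2: "0 < N2" using qs q p1 p2 by (auto simp: pp_conditions_iff)
  define J3 where "J3 = Js \<union> (\<lambda>j. N1 + j) ` J"
  define u3 where "u3 j = (if j < N1 then us j else u (j - N1))" for j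
  have q3: "(ppf_conj \<phi>s \<phi>, \<lambda>j. if j < N1 then ws j else w (j - N1), J3, u3) \<in> pp_conditions B G b"
    using pp_conditions_conj[OF B qs q] p1 unfolding J3_def u3_def by (simp cong: if_cong)
  then have J3: "J3 \<subseteq> {..<fst (ppf_conj \<phi>s \<phi>)}" by (simp add: pp_conditions_iff)
  have sub: "param_pp_set X (ppf_conj \<phi>s \<phi>) J3 u3 \<subseteq> param_pp_set X \<phi>s Js us \<inter> param_pp_set X \<phi> J u"
    unfolding J3_def u3_def by (rule X.param_pp_set_conj[OF p1 p2 Js(2) N2 Js(1)])
  have "param_pp_set X (ppf_conj \<phi>s \<phi>) J3 (\<lambda>_. mzero X) \<subseteq> param_pp_set X \<phi>s Js (\<lambda>_. mzero X)"
    using X.param_pp_set_conj[OF p1 p2 Js(2) N2 Js(1), of J "\<lambda>_. mzero X" "\<lambda>_. mzero X"]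
    unfolding J3_def by simp
  then have hom_eq: "param_pp_set X (ppf_conj \<phi>s \<phi>) J3 (\<lambda>_. mzero X)
      = param_pp_set X \<phi>s Js (\<lambda>_. mzero X)"
    using minimal[OF q3] X.pp_set_vanish[OF J3] X.pp_set_vanish[of Js \<phi>s] Js p1 by auto
  obtain s where s: "s \<in> param_pp_set X (ppf_conj \<phi>s \<phi>) J3 u3"
    using transfers_param_pp_set_nonempty[OF G q3] by blast
  have c: "s \<in> mcarrier X" "ts \<in> mcarrier X" using s ts unfolding param_pp_set_def by auto
  have "madd X ts (mneg X s) \<in> param_pp_set X (ppf_conj \<phi>s \<phi>) J3 (\<lambda>_. mzero X)"
    using X.param_pp_set_diff[of Js \<phi>s ts us s] ts s sub Js p1 hom_eq by auto
  then have "madd X s (madd X ts (mneg X s)) \<in> param_pp_set X (ppf_conj \<phi>s \<phi>) J3 u3"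
    by (rule X.param_pp_set_add[OF s _ J3])
  moreover have "madd X s (madd X ts (mneg X s)) = ts"
    using c by (metis X.add_assoc X.add_comm X.add_neg_r X.add_zero_r X.neg_closed)
  ultimately show ?thesis using sub by auto
qed

lemma pp_dcc_common_value:
  fixes B :: "('r::ring_1, 'b) rmod" and X :: "('r, 'x) rmod"
  assumes B: "right_module B" and X: "right_module X" and dcc: "pp_dcc X"
    and G: "transfers B X G" and b: "b \<in> mcarrier B"
  obtains t where "t \<in> mcarrier X" "\<And>\<phi> w J u. (\<phi>, w, J, u) \<in> pp_conditions B G b
      \<Longrightarrow> t \<in> param_pp_set X \<phi> J u"
proof -
  define Q where "Q = pp_conditions B G b"
  define F where "F = (\<lambda>(\<phi>::'r ppf, w::nat \<Rightarrow> 'b, J::nat set, u::nat \<Rightarrow> 'x). ppf_vanish \<phi> J)"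
  have init: "((1, 0, \<lambda>_ _. 0), \<lambda>_. b, {}, \<lambda>_. mzero X) \<in> Q"
    using b by (simp add: Q_def pp_conditions_iff solves_iff)
  have pos: "\<And>q. q \<in> Q \<Longrightarrow> 0 < fst (F q)" by (auto simp: Q_def F_def pp_conditions_iff fst_ppf_vanish)
  have "\<exists>q0\<in>Q. \<forall>q\<in>Q. \<not> pp_set X (F q) \<subset> pp_set X (F q0)"
    by (rule pp_dcc_minimal[OF dcc init]) (rule pos)
  then obtain \<phi>s ws Js us where qs: "(\<phi>s, ws, Js, us) \<in> pp_conditions B G b"
    and minimal: "\<And>\<phi> w J u. (\<phi>, w, J, u) \<in> pp_conditions B G b \<Longrightarrow>
      \<not> pp_set X (ppf_vanish \<phi> J) \<subset> pp_set X (ppf_vanish \<phi>s Js)"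
    unfolding Q_def F_def by fastforce
  obtain ts where ts: "ts \<in> param_pp_set X \<phi>s Js us"
    using transfers_param_pp_set_nonempty[OF G qs] by blast
  have "ts \<in> param_pp_set X \<phi> J u" if "(\<phi>, w, J, u) \<in> pp_conditions B G b" for \<phi> w J u
    by (rule minimal_pp_condition_realizes[OF B X G qs _ ts that]) (fact minimal)
  moreover have "ts \<in> mcarrier X" using ts unfolding param_pp_set_def by auto
  ultimately show thesis using that by blast
qed

text \<open>Identifying the unknowns equal to b with a fresh variable turns a system over the domain of
  G extended by b into a pp condition on b.\<close>
lemma transfers_insert:
  fixes B :: "('r::ring_1, 'b) rmod" and X :: "('r, 'x) rmod"
  assumes B: "right_module B" and X: "right_module X" and dcc: "pp_dcc X"
    and G: "transfers B X G" and b: "b \<in> mcarrier B" and new: "\<And>t. (b, t) \<notin> G"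
  shows "\<exists>t\<in>mcarrier X. transfers B X (insert (b, t) G)"
proof -
  interpret B: rmodule B by (rule rmodule.intro[OF B])
  interpret X: rmodule X by (rule rmodule.intro[OF X])
  obtain t where t: "t \<in> mcarrier X"
    and common: "\<And>\<phi> w J u. (\<phi>, w, J, u) \<in> pp_conditions B G b \<Longrightarrow> t \<in> param_pp_set X \<phi> J u"
    using pp_dcc_common_value[OF B X dcc G b] by blast
  have "transfers B X (insert (b, t) G)"
    unfolding transfers_def
  proof (intro allI impI, elim conjE)
    fix \<phi> w J u assume w: "solves B \<phi> w" and J: "J \<subseteq> {..<fst \<phi>}" and G':
        "\<forall>j\<in>J. (w j, u j) \<in> insert (b, t) G"
    define J2 where "J2 = {j \<in> J. w j = b}"
    define J1 where "J1 = {j \<in> J. w j \<noteq> b}"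
    define wt where "wt j = (case j of 0 \<Rightarrow> b | Suc k \<Rightarrow> w k)" for j
    define ut where "ut j = (case j of 0 \<Rightarrow> t | Suc k \<Rightarrow> u k)" for j
    have "solves B (ppf_link \<phi> J2) wt" unfolding B.solves_link using b w by (auto simp: wt_def J2_def)
    then have "(ppf_link \<phi> J2, wt, Suc ` J1, ut) \<in> pp_conditions B G b"
      using G' J by (auto simp: pp_conditions_iff fst_ppf_link wt_def ut_def J1_def)
    then obtain w' where w': "solves X (ppf_link \<phi> J2) w'" "w' 0 = t" "\<forall>j\<in>Suc ` J1. w' j = ut j"
      using common unfolding param_pp_set_def by blast
    have s: "solves X \<phi> (\<lambda>j. w' (Suc j))" "\<forall>k\<in>J2. k < fst \<phi> \<longrightarrow> w' (Suc k) = w' 0"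
      using w'(1) X.solves_link by auto
    have "w' (Suc j) = u j" if j: "j \<in> J" for j
    proof (cases "w j = b")
      case True
      then have "j \<in> J2" "u j = t" using j G' new by (auto simp: J2_def)
      then show ?thesis using s(2) J j w'(2) by auto
    next
      case False
      then have "j \<in> J1" using j by (simp add: J1_def)
      then show ?thesis using w'(3) by (auto simp: ut_def)
    qed
    then show "\<exists>w'. solves X \<phi> w' \<and> (\<forall>j\<in>J. w' j = u j)" using s(1) by blast
  qed
  then show ?thesis using t by blast
qed

lemma transfers_maximal:
  assumes "G0 \<subseteq> mcarrier B \<times> mcarrier X" "transfers B X G0"
  shows "\<exists>Gm\<in>{G. G \<subseteq> mcarrier B \<times> mcarrier X \<and> G0 \<subseteq> G \<and> transfers B X G}.
    \<forall>G\<in>{G. G \<subseteq> mcarrier B \<times> mcarrier X \<and> G0 \<subseteq> G \<and> transfers B X G}. Gm \<subseteq> G \<longrightarrow> G = Gm"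
    (is "\<exists>Gm\<in>?\<G>. _")
proof (rule Zorn_Lemma2, intro ballI)
  fix C assume C: "C \<in> chains ?\<G>"
  show "\<exists>U\<in>?\<G>. \<forall>G\<in>C. G \<subseteq> U"
  proof (cases "C = {}")
    case True then show ?thesis using assms by blast
  next
    case False
    have chain: "subset.chain ?\<G> C" using C by (simp add: chains_alt_def)
    have C_sub: "C \<subseteq> ?\<G>" using C by (simp add: chains_def)
    have "transfers B X (\<Union>C)" by (rule transfers_Union[OF chain False]) (use C_sub in auto)
    moreover have "\<Union>C \<subseteq> mcarrier B \<times> mcarrier X" "G0 \<subseteq> \<Union>C" using C_sub False by auto
    ultimately show ?thesis by blast
  qed
qed

text \<open>A maximal transferring relation extending the graph of g along f is defined on all of B by
  transfers_insert, hence it is the graph of the required extension.\<close>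
lemma pp_dcc_extend_along_pure_mono:
  fixes A :: "('r::ring_1, 'a) rmod" and B :: "('r, 'b) rmod" and X :: "('r, 'x) rmod"
  assumes A: "right_module A" and B: "right_module B" and X: "right_module X" and dcc: "pp_dcc X"
    and pure: "pure_mono A B f" and g: "g \<in> rhom A X"
  shows "\<exists>h\<in>rhom B X. \<forall>a\<in>mcarrier A. h (f a) = g a"
proof -
  have f: "f \<in> rhom A B" using pure by (simp add: pure_mono_def)
  define G0 where "G0 = (\<lambda>a. (f a, g a)) ` mcarrier A"
  have "G0 \<subseteq> mcarrier B \<times> mcarrier X" using rhom_closed[OF f] rhom_closed[OF g] unfolding G0_def by auto
  moreover have "transfers B X G0" unfolding G0_def by (rule pure_mono_graph_transfers[OF A B X pure g])
  ultimately have "\<exists>Gm\<in>{G. G \<subseteq> mcarrier B \<times> mcarrier X \<and> G0 \<subseteq> G \<and> transfers B X G}.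
      \<forall>G\<in>{G. G \<subseteq> mcarrier B \<times> mcarrier X \<and> G0 \<subseteq> G \<and> transfers B X G}. Gm \<subseteq> G \<longrightarrow> G = Gm"
    by (rule transfers_maximal)
  then obtain Gm where Gm: "Gm \<in> {G. G \<subseteq> mcarrier B \<times> mcarrier X \<and> G0 \<subseteq> G \<and> transfers B X G}"
    and max: "\<forall>G\<in>{G. G \<subseteq> mcarrier B \<times> mcarrier X \<and> G0 \<subseteq> G \<and> transfers B X G}. Gm \<subseteq> G \<longrightarrow> G = Gm"
    by (rule bexE)
  then have sub: "Gm \<subseteq> mcarrier B \<times> mcarrier X" and G0m: "G0 \<subseteq> Gm" and Gm_tr: "transfers B X Gm"
    by simp_all
  have maximal: "G = Gm" if "G \<subseteq> mcarrier B \<times> mcarrier X" "Gm \<subseteq> G" "transfers B X G" for G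
    using max that G0m by blast
  have "\<exists>t. (b, t) \<in> Gm" if b: "b \<in> mcarrier B" for b
  proof (rule ccontr)
    assume new: "\<nexists>t. (b, t) \<in> Gm"
    then obtain t where t: "t \<in> mcarrier X" "transfers B X (insert (b, t) Gm)"
      using transfers_insert[OF B X dcc Gm_tr b] by blast
    have "insert (b, t) Gm = Gm" by (rule maximal) (use b t sub in auto)
    then show False using new by blast
  qed
  then obtain h where h: "h \<in> rhom B X" "\<And>b t. (b, t) \<in> Gm \<Longrightarrow> h b = t"
    using transfers_graph_rhom[OF B X Gm_tr sub] by blast
  have "h (f a) = g a" if "a \<in> mcarrier A" for a using h(2) G0m that unfolding G0_def by blast
  then show ?thesis using h(1) by blast
qed

section \<open>Direct limits and the Mittag-Leffler condition\<close>

locale dirlim_system =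
  fixes T :: "('r::ring_1, 'm) rmod" and I :: "'i set" and le :: "'i \<Rightarrow> 'i \<Rightarrow> bool"
    and D :: "'i \<Rightarrow> ('r, 'c) rmod" and f :: "'i \<Rightarrow> 'i \<Rightarrow> 'c \<Rightarrow> 'c" and g :: "'i \<Rightarrow> 'c \<Rightarrow> 'm"
  assumes module: "right_module T"
    and index_nonempty: "I \<noteq> {}"
    and le_trans: "\<And>i j k. i \<in> I \<Longrightarrow> j \<in> I \<Longrightarrow> k \<in> I \<Longrightarrow> le i j \<Longrightarrow> le j k \<Longrightarrow> le i k"
    and directed: "\<And>i j. i \<in> I \<Longrightarrow> j \<in> I \<Longrightarrow> \<exists>k\<in>I. le i k \<and> le j k"
    and D_module: "\<And>i. i \<in> I \<Longrightarrow> right_module (D i)"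
    and f_rhom: "\<And>i j. i \<in> I \<Longrightarrow> j \<in> I \<Longrightarrow> le i j \<Longrightarrow> f i j \<in> rhom (D i) (D j)"
    and f_comp: "\<And>i j k x. i \<in> I \<Longrightarrow> j \<in> I \<Longrightarrow> k \<in> I \<Longrightarrow> le i j \<Longrightarrow> le j k \<Longrightarrow>
      x \<in> mcarrier (D i) \<Longrightarrow> f j k (f i j x) = f i k x"
    and g_rhom: "\<And>i. i \<in> I \<Longrightarrow> g i \<in> rhom (D i) T"
    and g_compat: "\<And>i j x. i \<in> I \<Longrightarrow> j \<in> I \<Longrightarrow> le i j \<Longrightarrow> x \<in> mcarrier (D i) \<Longrightarrow>
      g j (f i j x) = g i x"
    and carrier_eq: "mcarrier T = (\<Union>i\<in>I. g i ` mcarrier (D i))"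
    and g_kernel: "\<And>i x. i \<in> I \<Longrightarrow> x \<in> mcarrier (D i) \<Longrightarrow> g i x = mzero T \<Longrightarrow>
      \<exists>j\<in>I. le i j \<and> f i j x = mzero (D j)"
begin

lemma upper_bound: "(\<And>j. j < n \<Longrightarrow> a j \<in> I) \<Longrightarrow> \<exists>k\<in>I. \<forall>j<n. le (a j) k"
  for n :: nat
proof (induction n)
  case 0 then show ?case using index_nonempty by auto
next
  case (Suc n)
  then obtain k where k: "k \<in> I" "\<forall>j<n. le (a j) k" by auto
  obtain k' where k': "k' \<in> I" "le k k'" "le (a n) k'" using directed[OF k(1), of "a n"] Suc.prems
    by auto
  have "le (a j) k'" if "j < Suc n" for j
    using that k k' Suc.prems le_trans[of "a j" k k'] by (cases "j = n") auto
  then show ?case using k' by blast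
qed

lemma lift_tuple:
  fixes n :: nat
  assumes "\<And>j. j < n \<Longrightarrow> t j \<in> mcarrier T"
  obtains k d where "k \<in> I" "\<And>j. j < n \<Longrightarrow> d j \<in> mcarrier (D k) \<and> g k (d j) = t j"
proof -
  have ex: "\<forall>j. \<exists>q. j < n \<longrightarrow> fst q \<in> I \<and> snd q \<in> mcarrier (D (fst q)) \<and> g (fst q) (snd q) = t j"
  proof (intro allI)
    fix j show "\<exists>q. j < n \<longrightarrow> fst q \<in> I \<and> snd q \<in> mcarrier (D (fst q)) \<and> g (fst q) (snd q) = t j"
    proof (cases "j < n")
      case True
      then have "t j \<in> (\<Union>i\<in>I. g i ` mcarrier (D i))" using assms carrier_eq by blast
      then obtain i x where "i \<in> I" "x \<in> mcarrier (D i)" "t j = g i x" by blast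
      then show ?thesis by (intro exI[of _ "(i, x)"]) simp
    qed simp
  qed
  obtain q where q: "\<forall>j. j < n \<longrightarrow> fst (q j) \<in> I \<and> snd (q j) \<in> mcarrier (D (fst (q j))) \<and>
      g (fst (q j)) (snd (q j)) = t j"
    using choice[OF ex] by blast
  obtain k where k: "k \<in> I" "\<forall>j<n. le (fst (q j)) k"
    using upper_bound[of n "\<lambda>j. fst (q j)"] q by blast
  have lifted: "f (fst (q j)) k (snd (q j)) \<in> mcarrier (D k) \<and> g k (f (fst (q j)) k (snd (q j))) = t j"
    if j: "j < n" for j
  proof -
    have "fst (q j) \<in> I" "snd (q j) \<in> mcarrier (D (fst (q j)))" "le (fst (q j)) k"
      using q k j by auto
    then show ?thesis using rhom_closed[OF f_rhom] g_compat k(1) q j by auto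
  qed
  show thesis using that[OF k(1) lifted] .
qed

lemma kill_tuple:
  fixes n :: nat
  assumes "k \<in> I" "\<And>i. i < n \<Longrightarrow> x i \<in> mcarrier (D k) \<and> g k (x i) = mzero T"
  obtains k' where "k' \<in> I" "le k k'" "\<And>i. i < n \<Longrightarrow> f k k' (x i) = mzero (D k')"
proof -
  have "\<forall>i. \<exists>b. i < n \<longrightarrow> b \<in> I \<and> le k b \<and> f k b (x i) = mzero (D b)"
    using assms g_kernel by blast
  then obtain b where "\<forall>i. i < n \<longrightarrow> b i \<in> I \<and> le k (b i) \<and> f k (b i) (x i) = mzero (D (b i))"
    by (rule choice[THEN exE])
  then have b: "\<And>i. i < n \<Longrightarrow> b i \<in> I \<and> le k (b i) \<and> f k (b i) (x i) = mzero (D (b i))"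
    by blast
  have "(if i < n then b i else k) \<in> I" if "i < Suc n" for i using b assms(1) by simp
  then obtain k' where k': "k' \<in> I" "\<forall>i<Suc n. le (if i < n then b i else k) k'"
    using upper_bound[of "Suc n" "\<lambda>i. if i < n then b i else k"] by blast
  have "le k k'" using spec[OF k'(2), of n] by simp
  moreover have "f k k' (x i) = mzero (D k')" if i: "i < n" for i
  proof -
    have bi: "b i \<in> I" "le k (b i)" "le (b i) k'" using b[OF i] spec[OF k'(2), of i] i by auto
    have "f k k' (x i) = f (b i) k' (f k (b i) (x i))"
      using f_comp[OF assms(1) bi(1) k'(1) bi(2,3)] assms(2)[OF i] by simp
    also have "\<dots> = f (b i) k' (mzero (D (b i)))" using b[OF i] by simp
    also have "\<dots> = mzero (D k')" using rhom_zero[OF D_module D_module f_rhom] bi k'(1) by blast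
    finally show ?thesis .
  qed
  ultimately show thesis using that k'(1) by blast
qed

text \<open>A solution in T comes from a tuple in some D k whose relations hold only after applying g k;
  these finitely many relations are then killed at a later stage.\<close>
lemma pp_set_lift:
  assumes t: "t \<in> pp_set T \<phi>" and pos: "0 < fst \<phi>"
  shows "\<exists>k\<in>I. \<exists>d\<in>pp_set (D k) \<phi>. g k d = t"
proof -
  obtain N m E where p: "\<phi> = (N, m, E)" by (cases \<phi>) auto
  obtain w where w: "solves T \<phi> w" "w 0 = t" using t by (auto simp: pp_set_def)
  have wc: "\<And>j. j < N \<Longrightarrow> w j \<in> mcarrier T" and we: "\<And>i. i < m \<Longrightarrow> lin_comb T N w (E i) = mzero T"
    using w p by (auto simp: solves_iff lin_comb_def)
  obtain k d where k: "k \<in> I" and d: "\<And>j. j < N \<Longrightarrow> d j \<in> mcarrier (D k) \<and> g k (d j) = w j"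
    using lift_tuple[of N w] wc by blast
  have Dk: "right_module (D k)" using D_module[OF k] .
  have dc: "\<And>j. j < N \<Longrightarrow> d j \<in> mcarrier (D k)" using d by blast
  have "g k (lin_comb (D k) N d (E i)) = lin_comb T N (\<lambda>j. g k (d j)) (E i)" for i
    by (rule rhom_lin_comb[OF Dk module g_rhom[OF k] dc])
  also have "lin_comb T N (\<lambda>j. g k (d j)) (E i) = lin_comb T N w (E i)" for i
    using d by (intro lin_comb_cong) blast
  finally have dies: "g k (lin_comb (D k) N d (E i)) = mzero T" if "i < m" for i
    using we[OF that] by simp
  have "lin_comb (D k) N d (E i) \<in> mcarrier (D k)" for i
    using rmodule.lin_comb_closed[OF rmodule.intro[OF Dk] dc] .
  then obtain k' where k': "k' \<in> I" "le k k'"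
    and killed: "\<And>i. i < m \<Longrightarrow> f k k' (lin_comb (D k) N d (E i)) = mzero (D k')"
    using kill_tuple[of k m "\<lambda>i. lin_comb (D k) N d (E i)"] k dies by blast
  have fk: "f k k' \<in> rhom (D k) (D k')" using f_rhom[OF k k'(1,2)] .
  have Dk': "right_module (D k')" using D_module[OF k'(1)] .
  have "lin_comb (D k') N (\<lambda>j. f k k' (d j)) (E i) = mzero (D k')" if "i < m" for i
    using rhom_lin_comb[OF Dk Dk' fk dc] killed[OF that] by simp
  then have "solves (D k') \<phi> (\<lambda>j. f k k' (d j))"
    using rhom_closed[OF fk dc] unfolding p solves_iff lin_comb_def by blast
  moreover have "f k k' (d 0) \<in> mcarrier (D k')" using rhom_closed[OF fk dc] pos p by simp
  moreover have "g k' (f k k' (d 0)) = t" using g_compat[OF k k'(1,2)] d w(2) pos p by simp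
  ultimately show ?thesis using k'(1) unfolding pp_set_def by blast
qed

end

primrec chain_map :: "(nat \<Rightarrow> ('r::ring_1, 'c) rmod) \<Rightarrow> (nat \<Rightarrow> 'c \<Rightarrow> 'c) \<Rightarrow> nat \<Rightarrow> nat \<Rightarrow> 'c \<Rightarrow> 'c" where
  "chain_map C h n 0 = restrict id (mcarrier (C n))"
| "chain_map C h n (Suc k) = restrict (h (n + k) \<circ> chain_map C h n k) (mcarrier (C n))"

lemma chain_map_rhom:
  assumes "\<And>n. right_module (C n)" "\<And>n. h n \<in> rhom (C n) (C (Suc n))"
  shows "chain_map C h n k \<in> rhom (C n) (C (n + k))"
proof (induction k)
  case 0 then show ?case using rhom_id[OF assms(1)] by (simp only: chain_map.simps add_0_right)
next
  case (Suc k)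
  then show ?case using rhom_comp[OF assms(1) Suc assms(2)[of "n + k"]]
    by (simp only: chain_map.simps add_Suc_right)
qed

lemma chain_map_comp:
  assumes "\<And>n. right_module (C n)" "\<And>n. h n \<in> rhom (C n) (C (Suc n))"
    and x: "x \<in> mcarrier (C n)"
  shows "chain_map C h (n + k) l (chain_map C h n k x) = chain_map C h n (k + l) x"
proof (induction l)
  case 0
  have "chain_map C h n k x \<in> mcarrier (C (n + k))"
    using chain_map_rhom[of C h, OF assms(1,2)] x rhom_closed by metis
  then show ?case by simp
next
  case (Suc l)
  have "chain_map C h n k x \<in> mcarrier (C (n + k))"
    using chain_map_rhom[of C h, OF assms(1,2)] x rhom_closed by metis
  then show ?case using Suc x by (simp add: add.assoc)
qed

lemma omega_dirsys_chain_map: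
  assumes "\<And>n. right_module (C n)" "\<And>n. h n \<in> rhom (C n) (C (Suc n))"
  shows "omega_dirsys C (\<lambda>m n. chain_map C h n (m - n))"
  unfolding omega_dirsys_def
proof (intro conjI allI impI ballI)
  fix n m :: nat assume "n \<le> m"
  then show "chain_map C h n (m - n) \<in> rhom (C n) (C m)"
    using chain_map_rhom[of C h, OF assms, of n "m - n"] by simp
next
  fix n x assume "x \<in> mcarrier (C n)" then show "chain_map C h n (n - n) x = x" by simp
next
  fix n m k x assume nm: "n \<le> m \<and> m \<le> k" and x: "x \<in> mcarrier (C n)"
  have "chain_map C h (n + (m - n)) (k - m) (chain_map C h n (m - n) x)
      = chain_map C h n ((m - n) + (k - m)) x"
    by (rule chain_map_comp[of C h, OF assms x])
  then show "chain_map C h m (k - m) (chain_map C h n (m - n) x) = chain_map C h n (k - n) x"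
    using nm by (simp add: add.commute)
qed


definition left_approx ::
  "('r::ring_1, 'c) rmod set \<Rightarrow> ('r, 'f) rmod \<Rightarrow> ('r, 'c) rmod \<Rightarrow> ('f \<Rightarrow> 'c) \<Rightarrow> bool" where
  "left_approx \<C> F C p \<longleftrightarrow> C \<in> \<C> \<and> p \<in> rhom F C \<and>
     (\<forall>C'\<in>\<C>. \<forall>g\<in>rhom F C'. \<exists>h\<in>rhom C C'. \<forall>x\<in>mcarrier F. g x = h (p x))"

lemma cov_finite_right_module: "cov_finite \<C> \<Longrightarrow> C \<in> \<C> \<Longrightarrow> right_module C"
  unfolding cov_finite_def using fin_pres_right_module by blast

lemma cov_finite_approx_seq:
  fixes \<C> :: "('r::ring_1, 'c) rmod set" and \<psi> :: "nat \<Rightarrow> 'r ppf"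
  assumes "cov_finite \<C>"
  obtains C p where "\<And>n. left_approx \<C> (free_realization (\<psi> n)) (C n) (p n)"
proof -
  have "\<forall>n. \<exists>C p. left_approx \<C> (free_realization (\<psi> n)) C p"
    using assms fin_pres_free_realization unfolding cov_finite_def left_approx_def by blast
  then show thesis using that by metis
qed

lemma in_dirlim_dirlim_system:
  fixes \<C> :: "('r::ring_1, 'c) rmod set" and T :: "('r, 'm) rmod"
  assumes "in_dirlim TYPE('i) \<C> T" "\<And>C. C \<in> \<C> \<Longrightarrow> right_module C"
  obtains I :: "'i set" and le D f g where "dirlim_system T I le D f g" "\<And>i. i \<in> I \<Longrightarrow> D i \<in> \<C>"
  using assms(1) unfolding in_dirlim_def
proof (elim conjE exE)
  fix I :: "'i set" and le D f g
  assume hyps: "right_module T" "I \<noteq> {}" "\<forall>i\<in>I. D i \<in> \<C>"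
    "\<forall>i\<in>I. \<forall>j\<in>I. \<forall>k\<in>I. le i j \<and> le j k \<longrightarrow> le i k"
    "\<forall>i\<in>I. \<forall>j\<in>I. \<exists>k\<in>I. le i k \<and> le j k"
    "\<forall>i\<in>I. \<forall>j\<in>I. le i j \<longrightarrow> f i j \<in> rhom (D i) (D j)"
    "\<forall>i\<in>I. \<forall>j\<in>I. \<forall>k\<in>I. le i j \<and> le j k \<longrightarrow> (\<forall>x\<in>mcarrier (D i). f j k (f i j x) = f i k x)"
    "\<forall>i\<in>I. g i \<in> rhom (D i) T"
    "\<forall>i\<in>I. \<forall>j\<in>I. le i j \<longrightarrow> (\<forall>x\<in>mcarrier (D i). g j (f i j x) = g i x)"
    "mcarrier T = (\<Union>i\<in>I. g i ` mcarrier (D i))"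
    "\<forall>i\<in>I. \<forall>x\<in>mcarrier (D i). g i x = mzero T \<longrightarrow> (\<exists>j\<in>I. le i j \<and> f i j x = mzero (D j))"
  have "dirlim_system T I le D f g"
  proof unfold_locales
    show "right_module (D i)" if "i \<in> I" for i using hyps(3) assms(2) that by blast
  qed (use hyps in blast)+
  then show thesis using that \<open>\<forall>i\<in>I. D i \<in> \<C>\<close> by blast
qed

lemma (in dirlim_system) pp_set_eq_approx_image:
  assumes D: "\<And>i. i \<in> I \<Longrightarrow> D i \<in> \<C>" and C: "\<And>C. C \<in> \<C> \<Longrightarrow> right_module C"
    and approx: "left_approx \<C> (free_realization \<psi>) Cp p" and pos: "0 < fst \<psi>"
  shows "pp_set T \<psi> = (\<lambda>u. u (p (generic_point \<psi>))) ` rhom Cp T"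
proof -
  have Cp: "right_module Cp" "p \<in> rhom (free_realization \<psi>) Cp" using approx C
    by (auto simp: left_approx_def)
  have "p (generic_point \<psi>) \<in> pp_set Cp \<psi>"
    by (rule pp_set_rhom[OF free_realization_module Cp(1,2) generic_point_pp_set[OF pos]])
  then have "(\<lambda>u. u (p (generic_point \<psi>))) ` rhom Cp T \<subseteq> pp_set T \<psi>"
    using pp_set_rhom[OF Cp(1) module] by blast
  moreover have "pp_set T \<psi> \<subseteq> (\<lambda>u. u (p (generic_point \<psi>))) ` rhom Cp T"
  proof
    fix t assume "t \<in> pp_set T \<psi>"
    then obtain k d where k: "k \<in> I" "d \<in> pp_set (D k) \<psi>" "g k d = t" using pp_set_lift pos by blast
    obtain w where w: "solves (D k) \<psi> w" "w 0 = d" using k(2) unfolding pp_set_def by blast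
    obtain v where v: "v \<in> rhom (free_realization \<psi>) (D k)" "v (generic_point \<psi>) = d"
      using free_realization_universal[OF D_module[OF k(1)] w(1) pos] w(2) by blast
    obtain h where h: "h \<in> rhom Cp (D k)" "\<forall>x\<in>mcarrier (free_realization \<psi>). v x = h (p x)"
      using approx v(1) D[OF k(1)] unfolding left_approx_def by blast
    have "restrict (g k \<circ> h) (mcarrier Cp) (p (generic_point \<psi>)) = t"
      using h(2) v(2) k(3) rhom_closed[OF Cp(2) generic_point_carrier[OF pos]]
        generic_point_carrier[OF pos] by auto
    moreover have "restrict (g k \<circ> h) (mcarrier Cp) \<in> rhom Cp T"
      using rhom_comp[OF _ h(1) g_rhom[OF k(1)]] approx C unfolding left_approx_def by blast
    ultimately show "t \<in> (\<lambda>u. u (p (generic_point \<psi>))) ` rhom Cp T" by (intro image_eqI) auto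
  qed
  ultimately show ?thesis by blast
qed

text \<open>A pp formula implying \<psi> holds at the image of the generic point of \<psi>', so the universal
  property of the free realization and of the left approximation yields the connecting map.\<close>
lemma approx_connecting_map:
  assumes C: "\<And>C. C \<in> \<C> \<Longrightarrow> right_module C"
    and approx: "left_approx \<C> (free_realization \<psi>) Cp p" "left_approx \<C> (free_realization \<psi>') Cp' p'"
    and pos: "0 < fst \<psi>" "0 < fst \<psi>'"
    and impl: "pp_set Cp' \<psi>' \<subseteq> pp_set Cp' \<psi>"
  shows "\<exists>h\<in>rhom Cp Cp'. h (p (generic_point \<psi>)) = p' (generic_point \<psi>')"
proof -
  have Cp': "Cp' \<in> \<C>" "right_module Cp'" "p' \<in> rhom (free_realization \<psi>') Cp'"
    using approx(2) C by (auto simp: left_approx_def)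
  have "p' (generic_point \<psi>') \<in> pp_set Cp' \<psi>"
    using impl pp_set_rhom[OF free_realization_module Cp'(2,3) generic_point_pp_set[OF pos(2)]] by blast
  then obtain w where w: "solves Cp' \<psi> w" "w 0 = p' (generic_point \<psi>')" unfolding pp_set_def by blast
  obtain v where v: "v \<in> rhom (free_realization \<psi>) Cp'" "v (generic_point \<psi>) = p' (generic_point \<psi>')"
    using free_realization_universal[OF Cp'(2) w(1) pos(1)] w(2) by auto
  obtain h where h: "h \<in> rhom Cp Cp'" "\<forall>x\<in>mcarrier (free_realization \<psi>). v x = h (p x)"
    using approx(1) v(1) Cp'(1) unfolding left_approx_def by blast
  then show ?thesis using h v(2) generic_point_carrier[OF pos(1)] by auto
qed

lemma chain_map_image:
  assumes "\<And>n. h n \<in> rhom (C n) (C (Suc n))" "\<And>n. h n (y n) = y (Suc n)" "\<And>n. y n \<in> mcarrier (C n)"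
  shows "chain_map C h 0 k (y 0) = y k"
proof (induction k)
  case 0 then show ?case using assms(3) by simp
next
  case (Suc k)
  have "chain_map C h 0 k (y 0) \<in> mcarrier (C k)" using Suc assms(3) by simp
  then show ?case using Suc assms(2,3) by simp
qed

lemma hom_invsys_ML_stable_image:
  assumes "hom_invsys_ML D c T"
  shows "\<exists>m. \<forall>k\<ge>m. (\<lambda>u. restrict (u \<circ> c k 0) (mcarrier (D 0))) ` rhom (D k) T =
    (\<lambda>u. restrict (u \<circ> c m 0) (mcarrier (D 0))) ` rhom (D m) T"
  using assms unfolding hom_invsys_ML_def mittag_leffler_def by blast

lemma approx_chain:
  fixes \<C> :: "('r::ring_1, 'c) rmod set" and \<psi> :: "nat \<Rightarrow> 'r ppf"
  assumes cov: "cov_finite \<C>" and pos: "\<And>n. 0 < fst (\<psi> n)"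
    and dec: "\<And>n (M :: ('r, 'c) rmod). right_module M \<Longrightarrow> pp_set M (\<psi> (Suc n)) \<subseteq> pp_set M (\<psi> n)"
  obtains C p h where "\<And>n. left_approx \<C> (free_realization (\<psi> n)) (C n) (p n)"
    "\<And>n. h n \<in> rhom (C n) (C (Suc n))"
    "\<And>n. h n (p n (generic_point (\<psi> n))) = p (Suc n) (generic_point (\<psi> (Suc n)))"
proof -
  have C: "\<And>C. C \<in> \<C> \<Longrightarrow> right_module C" using cov_finite_right_module[OF cov] .
  obtain Cp p where approx: "\<And>n. left_approx \<C> (free_realization (\<psi> n)) (Cp n) (p n)"
    using cov_finite_approx_seq[OF cov] by blast
  have Cp: "\<And>n. right_module (Cp n)" using approx C by (auto simp: left_approx_def)
  have "\<exists>h\<in>rhom (Cp n) (Cp (Suc n)). h (p n (generic_point (\<psi> n)))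
      = p (Suc n) (generic_point (\<psi> (Suc n)))"
    for n by (rule approx_connecting_map[OF C approx[of n] approx[of "Suc n"] pos pos dec[OF Cp]])
  then have "\<forall>n. \<exists>h. h \<in> rhom (Cp n) (Cp (Suc n)) \<and>
      h (p n (generic_point (\<psi> n))) = p (Suc n) (generic_point (\<psi> (Suc n)))" by blast
  then obtain h where "\<forall>n. h n \<in> rhom (Cp n) (Cp (Suc n)) \<and>
      h n (p n (generic_point (\<psi> n))) = p (Suc n) (generic_point (\<psi> (Suc n)))"
    by (rule choice[THEN exE])
  then show thesis using that[OF approx] by blast
qed

lemma pp_chain_stabilizes:
  fixes \<C> :: "('r::ring_1, 'c) rmod set" and T :: "('r, 'm) rmod" and \<psi> :: "nat \<Rightarrow> 'r ppf"
  assumes cov: "cov_finite \<C>" and lim: "in_dirlim TYPE('i) \<C> T"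
    and ml: "\<forall>(D :: nat \<Rightarrow> ('r, 'c) rmod) c. (\<forall>n. D n \<in> \<C>) \<and> omega_dirsys D c \<longrightarrow> hom_invsys_ML D c T"
    and pos: "\<And>n. 0 < fst (\<psi> n)"
    and dec: "\<And>n (M :: ('r, 'c) rmod). right_module M \<Longrightarrow> pp_set M (\<psi> (Suc n)) \<subseteq> pp_set M (\<psi> n)"
  shows "\<exists>m. \<forall>k\<ge>m. pp_set T (\<psi> k) = pp_set T (\<psi> m)"
proof -
  have C: "\<And>C. C \<in> \<C> \<Longrightarrow> right_module C" using cov_finite_right_module[OF cov] .
  obtain I :: "'i set" and le D f g where lim': "dirlim_system T I le D f g" and D: "\<And>i. i \<in> I \<Longrightarrow> D i \<in> \<C>"
    using in_dirlim_dirlim_system[OF lim C] by blast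
  obtain Cp p h where approx: "\<And>n. left_approx \<C> (free_realization (\<psi> n)) (Cp n) (p n)"
    and h: "\<And>n. h n \<in> rhom (Cp n) (Cp (Suc n))"
    and h_gen: "\<And>n. h n (p n (generic_point (\<psi> n))) = p (Suc n) (generic_point (\<psi> (Suc n)))"
    using approx_chain[of \<C> \<psi>, OF cov pos dec] by blast
  have Cp: "\<And>n. Cp n \<in> \<C>" "\<And>n. right_module (Cp n)" using approx C by (auto simp: left_approx_def)
  define y where "y n = p n (generic_point (\<psi> n))" for n
  have y: "y n \<in> mcarrier (Cp n)" for n
  proof -
    have "p n \<in> rhom (free_realization (\<psi> n)) (Cp n)" using approx[of n] by (simp add: left_approx_def)
    then show ?thesis unfolding y_def using generic_point_carrier[OF pos] by (rule rhom_closed)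
  qed
  define c where "c m n = chain_map Cp h n (m - n)" for m n
  have c_y: "c k 0 (y 0) = y k" for k
    unfolding c_def by (simp add: chain_map_image[of h Cp y] h h_gen[folded y_def] y)
  have "omega_dirsys Cp c" unfolding c_def by (rule omega_dirsys_chain_map[of Cp h, OF Cp(2) h])
  then have "hom_invsys_ML Cp c T" using ml[rule_format, of Cp c] Cp(1) by blast
  then obtain m where m: "\<forall>k\<ge>m.
      (\<lambda>u. restrict (u \<circ> c k 0) (mcarrier (Cp 0))) ` rhom (Cp k) T =
      (\<lambda>u. restrict (u \<circ> c m 0) (mcarrier (Cp 0))) ` rhom (Cp m) T"
    using hom_invsys_ML_stable_image by blast
  have pp_eq: "pp_set T (\<psi> k)
      = (\<lambda>v. v (y 0)) ` ((\<lambda>u. restrict (u \<circ> c k 0) (mcarrier (Cp 0))) ` rhom (Cp k) T)"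
    for k
  proof -
    have "pp_set T (\<psi> k) = (\<lambda>u. u (y k)) ` rhom (Cp k) T"
      unfolding y_def by (rule dirlim_system.pp_set_eq_approx_image[OF lim' D C approx pos])
    also have "\<dots> = (\<lambda>v. v (y 0)) ` ((\<lambda>u. restrict (u \<circ> c k 0) (mcarrier (Cp 0))) ` rhom (Cp k) T)"
      unfolding image_image using y c_y by simp
    finally show ?thesis .
  qed
  show ?thesis
  proof (intro exI allI impI)
    fix k assume "m \<le> k"
    then show "pp_set T (\<psi> k) = pp_set T (\<psi> m)" unfolding pp_eq using spec[OF m, of k] by simp
  qed
qed

theorem lemma5p8:
  fixes \<C> :: "('r::ring_1, 'c) rmod set"
    and T :: "('r, 'm) rmod"
  assumes "cov_finite \<C>"
    and "in_dirlim TYPE('i) \<C> T"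
    and "\<forall>(D :: nat \<Rightarrow> ('r, 'c) rmod) c. (\<forall>n. D n \<in> \<C>) \<and> omega_dirsys D c \<longrightarrow> hom_invsys_ML D c T"
  shows "sigma_pure_injective TYPE('k) TYPE('a) TYPE('b) T"
proof -
  have T: "right_module T" using assms(2) unfolding in_dirlim_def by blast
  have stab: "\<exists>m. \<forall>k\<ge>m. pp_set T (\<psi> k) = pp_set T (\<psi> m)"
    if pos: "\<And>n. 0 < fst (\<psi> n)" and conj: "\<And>n. \<exists>\<chi>. 0 < fst \<chi> \<and> \<psi> (Suc n) = ppf_conj (\<psi> n) \<chi>" for \<psi>
  proof (rule pp_chain_stabilizes[OF assms pos])
    fix n and M :: "('r, 'c) rmod" assume M: "right_module M"
    obtain \<chi> where \<chi>: "0 < fst \<chi>" "\<psi> (Suc n) = ppf_conj (\<psi> n) \<chi>" using conj by blast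
    show "pp_set M (\<psi> (Suc n)) \<subseteq> pp_set M (\<psi> n)"
      unfolding \<chi>(2) rmodule.pp_set_conj[OF rmodule.intro[OF M] pos \<chi>(1)] by blast
  qed
  show ?thesis
    unfolding sigma_pure_injective_def pure_injective_def
  proof (intro allI conjI impI ballI)
    fix I :: "'k set"
    show X: "right_module (dsum I T)" by (rule rmodule.dsum_module[OF rmodule.intro[OF T]])
    fix A :: "('r, 'a) rmod" and B :: "('r, 'b) rmod" and f g
    assume "right_module A \<and> right_module B \<and> pure_mono A B f" and "g \<in> rhom A (dsum I T)"
    then show "\<exists>h\<in>rhom B (dsum I T). \<forall>a\<in>mcarrier A. h (f a) = g a"
      using pp_dcc_extend_along_pure_mono[OF _ _ X dsum_pp_dcc[OF T stab]] by blast
  qed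
qed

end
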